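(* Let $N\ge1$, $n\ge1$, let $b$ be a positive integer, and let $\Omega$, $\langle\cdot,\cdot\rangle_{b,N}$ (on $F_{N,n}$) and $(\cdot,\cdot)_{b,N}$ (on Laurent polynomials) be as in the context. Then for all $f,g\in F_{N,n}$, $$\langle f,g\rangle_{b,N}=(\Omega(f),\Omega(g))_{b,N}.$$
   Context: For $k\in\mathbb Z$, $\underline{k}\in\{1,\dots,N\}$, $\overline{k}\in\mathbb Z$ unique with $k=\underline{k}-N\overline{k}$. $V=\mathbb C^N$ with basis $v_1,\dots,v_N$. $K_{ij}$ swaps $z_i,z_j$, $P_{ij}$ swaps factors $i,j$ of $V^{\otimes n}$; $F_{N,n}=\{f\in\mathbb C[z_1^{\pm1},\dots,z_n^{\pm1}]\otimes V^{\otimes n}:K_{ij}f=-P_{ij}f\}$ with basis $\hat u_k=\sum_{w\in S_n}\mathrm{sign}(w)z_1^{\overline{k_{w(1)}}}\cdots z_n^{\overline{k_{w(n)}}}\otimes v_{\underline{k_{w(1)}}}\otimes\cdots\otimes v_{\underline{k_{w(n)}}}$, $k_1>\dots>k_n$. Let $o=(0,-1,\dots,-n+1)$; for non-increasing $l\in\mathbb Z^n$, $s_l=\det(x_i^{l_j+n-j})/\det(x_i^{n-j})$. $\Omega$ is the linear isomorphism from $F_{N,n}$ onto symmetric Laurent polynomials in $x_1,\dots,x_n$ with $\Omega(\hat u_k)=s_{k-o}$ for $k_1>\dots>k_n$. Scalar products. On $\mathbb C[z^{\pm1}]\otimes V^{\otimes n}$: $\langle f\otimes u,g\otimes v\rangle'_{b,N}=\frac1{n!}\prod_j\oint\frac{dw_j}{2\pi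 iw_j}\prod_{i\ne j}(1-w_iw_j^{-1})^b\,\bar f(w^{-1})g(w)\cdot\langle u,v\rangle_N$ (unit circles; $\bar f$ has conjugated coefficients; tensor monomials orthonormal for $\langle\cdot,\cdot\rangle_N$), extended sesquilinearly; $\langle\cdot,\cdot\rangle_{b,N}$ is the restriction to $F_{N,n}$. For Laurent polynomials in $x$: $f^*=\bar f(x_1^{-1},\dots,x_n^{-1})$, $[h]_1$ the constant term, $\Delta(b,N)=\prod_{1\le i\ne j\le n}(1-x_i^Nx_j^{-N})^b(1-x_ix_j^{-1})$, $(f,g)_{b,N}=\frac1{n!}[\Delta(b,N)f^*g]_1$. *)

theory Defs
  imports "HOL-Complex_Analysis.Complex_Analysis" "HOL-Library.Poly_Mapping"
    "HOL-Combinatorics.Permutations" "HOL-Combinatorics.Transposition"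
begin

text \<open>Indices are 0-based: variables z_1..z_n (resp. x_1..x_n) of the paper
are the keys 0..n-1; tensor factors 1..n are positions 0..n-1; basis vectors v_1..v_N
are labelled 1..N.  A Laurent polynomial (in countably many variables, of which only
0..n-1 will be used) is an element of type lpoly: exponent vectors are finitely
supported maps nat to int.\<close>

type_synonym lpoly = "(nat \<Rightarrow>\<^sub>0 int) \<Rightarrow>\<^sub>0 complex"

definition var_pow :: "nat \<Rightarrow> int \<Rightarrow> lpoly" where
  "var_pow i e = Poly_Mapping.single (Poly_Mapping.single i e) 1"

definition in_vars :: "nat \<Rightarrow> lpoly \<Rightarrow> bool" where
  "in_vars n p \<longleftrightarrow> (\<forall>a\<in>Poly_Mapping.keys p. Poly_Mapping.keys a \<subseteq> {..<n})"

text \<open>underline k in {1..N} and overline k with k = underline k - N * overline k\<close>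
definition ul :: "nat \<Rightarrow> int \<Rightarrow> int" where
  "ul N k = (k - 1) mod int N + 1"
definition ol :: "nat \<Rightarrow> int \<Rightarrow> int" where
  "ol N k = (ul N k - k) div int N"

text \<open>Tensor indices: c i is the label of the basis vector in factor i (i < n).\<close>
definition tidx :: "nat \<Rightarrow> nat \<Rightarrow> (nat \<Rightarrow> nat) set" where
  "tidx N n = {c. (\<forall>i<n. c i \<in> {1..N}) \<and> (\<forall>i\<ge>n. c i = 0)}"

text \<open>An element of C[z^{+-1}] (x) V^{(x)n} is represented by the family of its components:
T c is the Laurent polynomial coefficient of v_{c 0} (x) ... (x) v_{c (n-1)}.\<close>
definition tspace :: "nat \<Rightarrow> nat \<Rightarrow> ((nat \<Rightarrow> nat) \<Rightarrow> lpoly) set" where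
  "tspace N n = {T. (\<forall>c. c \<notin> tidx N n \<longrightarrow> T c = 0) \<and> (\<forall>c. in_vars n (T c))}"

definition swap_exp :: "nat \<Rightarrow> nat \<Rightarrow> (nat \<Rightarrow>\<^sub>0 int) \<Rightarrow> (nat \<Rightarrow>\<^sub>0 int)" where
  "swap_exp i j a = (\<Sum>l\<in>Poly_Mapping.keys a. Poly_Mapping.single (Transposition.transpose i j l) (Poly_Mapping.lookup a l))"
definition Kswap :: "nat \<Rightarrow> nat \<Rightarrow> lpoly \<Rightarrow> lpoly" where
  "Kswap i j p = (\<Sum>a\<in>Poly_Mapping.keys p. Poly_Mapping.single (swap_exp i j a) (Poly_Mapping.lookup p a))"

definition Kt :: "nat \<Rightarrow> nat \<Rightarrow> ((nat \<Rightarrow> nat) \<Rightarrow> lpoly) \<Rightarrow> ((nat \<Rightarrow> nat) \<Rightarrow> lpoly)" where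
  "Kt i j T = (\<lambda>c. Kswap i j (T c))"
definition Pt :: "nat \<Rightarrow> nat \<Rightarrow> ((nat \<Rightarrow> nat) \<Rightarrow> lpoly) \<Rightarrow> ((nat \<Rightarrow> nat) \<Rightarrow> lpoly)" where
  "Pt i j T = (\<lambda>c. T (c \<circ> Transposition.transpose i j))"

definition Fspace :: "nat \<Rightarrow> nat \<Rightarrow> ((nat \<Rightarrow> nat) \<Rightarrow> lpoly) set" where
  "Fspace N n = {T \<in> tspace N n. \<forall>i<n. \<forall>j<n. i \<noteq> j \<longrightarrow> Kt i j T = - Pt i j T}"

definition decseqs :: "nat \<Rightarrow> (nat \<Rightarrow> int) set" where
  "decseqs n = {k. (\<forall>i j. i < j \<longrightarrow> j < n \<longrightarrow> k j < k i) \<and> (\<forall>i\<ge>n. k i = 0)}"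

definition uhat :: "nat \<Rightarrow> nat \<Rightarrow> (nat \<Rightarrow> int) \<Rightarrow> ((nat \<Rightarrow> nat) \<Rightarrow> lpoly)" where
  "uhat N n k = (\<lambda>c. \<Sum>w | w permutes {..<n}.
      if c = (\<lambda>i. if i < n then nat (ul N (k (w i))) else 0)
      then Poly_Mapping.single (\<Sum>i<n. Poly_Mapping.single i (ol N (k (w i)))) (of_int (sign w))
      else 0)"

definition ovec :: "nat \<Rightarrow> nat \<Rightarrow> int" where
  "ovec n i = (if i < n then - int i else 0)"

definition altdet :: "nat \<Rightarrow> (nat \<Rightarrow> int) \<Rightarrow> lpoly" where
  "altdet n e = (\<Sum>\<sigma> | \<sigma> permutes {..<n}. of_int (sign \<sigma>) * (\<Prod>i<n. var_pow i (e (\<sigma> i))))"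

text \<open>s_l = det(x_i^{l_j+n-j}) / det(x_i^{n-j}) (exact quotient in the Laurent polynomial ring)\<close>
definition schur :: "nat \<Rightarrow> (nat \<Rightarrow> int) \<Rightarrow> lpoly" where
  "schur n l = (THE s. s * altdet n (\<lambda>j. int n - 1 - int j) = altdet n (\<lambda>j. l j + int n - 1 - int j))"

definition lscale :: "complex \<Rightarrow> lpoly \<Rightarrow> lpoly" where
  "lscale a p = Poly_Mapping.map (\<lambda>x. a * x) p"

text \<open>Omega: the linear map sending hat u_k to s_{k-o}\<close>
definition Omega :: "nat \<Rightarrow> nat \<Rightarrow> ((nat \<Rightarrow> nat) \<Rightarrow> lpoly) \<Rightarrow> lpoly" where
  "Omega N n T = (THE P. \<exists>coef :: (nat \<Rightarrow> int) \<Rightarrow> complex.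
      finite {k. coef k \<noteq> 0} \<and> {k. coef k \<noteq> 0} \<subseteq> decseqs n \<and>
      T = (\<lambda>c. \<Sum>k | coef k \<noteq> 0. lscale (coef k) (uhat N n k c)) \<and>
      P = (\<Sum>k | coef k \<noteq> 0. lscale (coef k) (schur n (\<lambda>i. k i - ovec n i))))"

definition leval :: "lpoly \<Rightarrow> (nat \<Rightarrow> complex) \<Rightarrow> complex" where
  "leval p w = (\<Sum>a\<in>Poly_Mapping.keys p. Poly_Mapping.lookup p a *
      (\<Prod>i\<in>Poly_Mapping.keys a. w i powi Poly_Mapping.lookup a i))"
definition leval_bar_inv :: "lpoly \<Rightarrow> (nat \<Rightarrow> complex) \<Rightarrow> complex" where
  "leval_bar_inv p w = (\<Sum>a\<in>Poly_Mapping.keys p. cnj (Poly_Mapping.lookup p a) *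
      (\<Prod>i\<in>Poly_Mapping.keys a. inverse (w i) powi Poly_Mapping.lookup a i))"

fun torus_int :: "nat \<Rightarrow> ((nat \<Rightarrow> complex) \<Rightarrow> complex) \<Rightarrow> complex" where
  "torus_int 0 h = h (\<lambda>_. 1)"
| "torus_int (Suc m) h = contour_integral (circlepath 0 1)
      (\<lambda>z. torus_int m (\<lambda>w. h (w(m := z))) / (2 * of_real pi * \<i> * z))"

definition ip_z :: "nat \<Rightarrow> nat \<Rightarrow> nat \<Rightarrow> ((nat \<Rightarrow> nat) \<Rightarrow> lpoly) \<Rightarrow> ((nat \<Rightarrow> nat) \<Rightarrow> lpoly) \<Rightarrow> complex" where
  "ip_z b N n F G = inverse (fact n) * torus_int n (\<lambda>w.
      (\<Prod>i<n. \<Prod>j\<in>{..<n} - {i}. (1 - w i * inverse (w j)) ^ b) *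
      (\<Sum>c\<in>tidx N n. leval_bar_inv (F c) w * leval (G c) w))"

definition lstar :: "lpoly \<Rightarrow> lpoly" where
  "lstar p = (\<Sum>a\<in>Poly_Mapping.keys p. Poly_Mapping.single (- a) (cnj (Poly_Mapping.lookup p a)))"

definition const_term :: "lpoly \<Rightarrow> complex" where
  "const_term h = Poly_Mapping.lookup h 0"

definition Delta :: "nat \<Rightarrow> nat \<Rightarrow> nat \<Rightarrow> lpoly" where
  "Delta b N n = (\<Prod>i<n. \<Prod>j\<in>{..<n} - {i}.
      (1 - var_pow i (int N) * var_pow j (- int N)) ^ b * (1 - var_pow i 1 * var_pow j (-1)))"

definition ip_x :: "nat \<Rightarrow> nat \<Rightarrow> nat \<Rightarrow> lpoly \<Rightarrow> lpoly \<Rightarrow> complex" where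
  "ip_x b N n f g = inverse (fact n) * const_term (Delta b N n * lstar f * g)"

end

theory Submission
  imports Defs
begin

text \<open>
  Both scalar products are sesquilinear, and \<open>\<Omega>\<close> maps the basis vector \<open>\<hat>u_k\<close> of
  \<open>F_{N,n}\<close> to \<open>s_{k-o}\<close>, so it suffices to compare them on pairs of basis vectors.

  Integration over the unit torus extracts the constant term of a Laurent polynomial, so
  \<open>n! <\<hat>u_k, \<hat>u_l>\<close> is the constant term of \<open>W(z) \<Sum>_c \<hat>u_k(c)^* \<hat>u_l(c)\<close> with
  \<open>W(z) = \<Prod>_{i\<noteq>j} (1 - z_i/z_j)^b\<close>.  On the other side, the Vandermonde identity
  \<open>a_\<delta> = \<Prod>_{i<j} (x_i - x_j)\<close> gives \<open>s_{k-o} a_\<delta> = (x_1\<cdots>x_n)^{n-1} a_k\<close> and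
  \<open>a_\<delta>^* a_\<delta> = \<Prod>_{i\<noteq>j} (1 - x_i/x_j)\<close>, hence \<open>\<Delta>(b,N) s_{k-o}^* s_{l-o} = W(x^N) a_k^* a_l\<close>.

  Both \<open>\<Sum>_c \<hat>u_k(c)^* \<hat>u_l(c)\<close> and \<open>a_k^* a_l\<close> expand over pairs of permutations
  \<open>(w, w')\<close>.  The monomial \<open>x^{k\<circ>w - l\<circ>w'}\<close> meets the monomials of \<open>W(x^N)\<close> only
  if \<open>k\<circ>w\<close> and \<open>l\<circ>w'\<close> agree modulo \<open>N\<close>, which is exactly when the corresponding terms
  of \<open>\<hat>u_k\<close> and \<open>\<hat>u_l\<close> carry the same tensor; the exponent is then \<open>N\<close> times the
  corresponding \<open>z\<close>-exponent, so the two constant terms agree term by term.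
\<close>

section \<open>Laurent polynomials\<close>

lemma poly_mapping_expand_superset:
  fixes p :: "'a \<Rightarrow>\<^sub>0 'b::comm_monoid_add"
  assumes "finite S" "Poly_Mapping.keys p \<subseteq> S"
  shows "p = (\<Sum>a\<in>S. Poly_Mapping.single a (Poly_Mapping.lookup p a))"
proof (rule poly_mapping_eqI)
  fix x
  show "Poly_Mapping.lookup p x = Poly_Mapping.lookup (\<Sum>a\<in>S. Poly_Mapping.single a (Poly_Mapping.lookup p a)) x"
    using assms by (auto simp: lookup_sum lookup_single when_def sum.delta' in_keys_iff)
qed

lemma poly_mapping_expand:
  fixes p :: "'a \<Rightarrow>\<^sub>0 'b::comm_monoid_add"
  shows "p = (\<Sum>a\<in>Poly_Mapping.keys p. Poly_Mapping.single a (Poly_Mapping.lookup p a))"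
  by (rule poly_mapping_expand_superset) auto

lemma lookup_mult_single:
  fixes p :: "'a::cancel_comm_monoid_add \<Rightarrow>\<^sub>0 'b::comm_semiring_0"
  shows "Poly_Mapping.lookup (p * Poly_Mapping.single e c) (x + e) = Poly_Mapping.lookup p x * c"
proof -
  have "p * Poly_Mapping.single e c =
      (\<Sum>a\<in>Poly_Mapping.keys p. Poly_Mapping.single (a + e) (Poly_Mapping.lookup p a * c))"
    by (subst poly_mapping_expand[of p]) (simp add: sum_distrib_right mult_single)
  then show ?thesis
    by (simp add: lookup_sum lookup_single when_def sum.delta in_keys_iff)
qed

locale comm_ring_hom =
  fixes hom :: "'a::comm_ring_1 \<Rightarrow> 'b::comm_ring_1"
  assumes hom_add: "hom (x + y) = hom x + hom y"
    and hom_mult: "hom (x * y) = hom x * hom y"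
    and hom_one: "hom 1 = 1"
begin

lemma hom_zero: "hom 0 = 0"
  using hom_add[of 0 0] by simp

lemma hom_uminus: "hom (- x) = - hom x"
  using hom_add[of x "- x"] by (simp add: hom_zero add_eq_0_iff)

lemma hom_diff: "hom (x - y) = hom x - hom y"
  using hom_add[of x "- y"] by (simp add: hom_uminus)

lemma hom_sum: "hom (sum f S) = (\<Sum>x\<in>S. hom (f x))"
  by (induction S rule: infinite_finite_induct) (simp_all add: hom_zero hom_add)

lemma hom_prod: "hom (prod f S) = (\<Prod>x\<in>S. hom (f x))"
  by (induction S rule: infinite_finite_induct) (simp_all add: hom_one hom_mult)

lemma hom_power: "hom (x ^ k) = hom x ^ k"
  by (induction k) (simp_all add: hom_one hom_mult)

end

lemma comm_ring_hom_poly_mappingI: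
  fixes \<phi> :: "('a::comm_monoid_add \<Rightarrow>\<^sub>0 'b::comm_ring_1) \<Rightarrow> 'c::comm_ring_1"
  assumes add: "\<And>p q. \<phi> (p + q) = \<phi> p + \<phi> q"
    and mult_single: "\<And>a b c d. \<phi> (Poly_Mapping.single a c * Poly_Mapping.single b d) =
      \<phi> (Poly_Mapping.single a c) * \<phi> (Poly_Mapping.single b d)"
    and one: "\<phi> 1 = 1"
  shows "comm_ring_hom \<phi>"
proof
  have sum: "\<phi> (sum f S) = (\<Sum>x\<in>S. \<phi> (f x))" for f :: "_ \<Rightarrow> _" and S
    using add[of 0 0] by (induction S rule: infinite_finite_induct) (simp_all add: add)
  fix p q :: "'a \<Rightarrow>\<^sub>0 'b"
  let ?e = "\<lambda>p a. Poly_Mapping.single a (Poly_Mapping.lookup p a)"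
  have "\<phi> (p * q) = \<phi> ((\<Sum>a\<in>Poly_Mapping.keys p. ?e p a) * (\<Sum>b\<in>Poly_Mapping.keys q. ?e q b))"
    by (simp flip: poly_mapping_expand)
  also have "\<dots> = (\<Sum>a\<in>Poly_Mapping.keys p. \<phi> (?e p a)) * (\<Sum>b\<in>Poly_Mapping.keys q. \<phi> (?e q b))"
    by (simp add: sum_product sum mult_single)
  also have "\<dots> = \<phi> p * \<phi> q"
    by (simp flip: sum poly_mapping_expand)
  finally show "\<phi> (p * q) = \<phi> p * \<phi> q" .
qed (use add one in auto)

definition push_keys :: "('a \<Rightarrow> 'b) \<Rightarrow> ('a \<Rightarrow>\<^sub>0 'c::comm_monoid_add) \<Rightarrow> ('b \<Rightarrow>\<^sub>0 'c)" where
  "push_keys h p = (\<Sum>a\<in>Poly_Mapping.keys p. Poly_Mapping.single (h a) (Poly_Mapping.lookup p a))"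

lemma push_keys_superset:
  assumes "finite S" "Poly_Mapping.keys p \<subseteq> S"
  shows "push_keys h p = (\<Sum>a\<in>S. Poly_Mapping.single (h a) (Poly_Mapping.lookup p a))"
  unfolding push_keys_def using assms
  by (intro sum.mono_neutral_left) (auto simp: in_keys_iff)

lemma push_keys_zero [simp]: "push_keys h 0 = 0"
  by (simp add: push_keys_def)

lemma push_keys_single [simp]:
  "push_keys h (Poly_Mapping.single a c) = Poly_Mapping.single (h a) c"
  by (simp add: push_keys_def)

lemma push_keys_add: "push_keys h (p + q) = push_keys h p + push_keys h q"
proof -
  let ?S = "Poly_Mapping.keys p \<union> Poly_Mapping.keys q"
  have "push_keys h (p + q) = (\<Sum>a\<in>?S. Poly_Mapping.single (h a) (Poly_Mapping.lookup (p + q) a))"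
    by (rule push_keys_superset) (auto dest: set_mp[OF keys_add])
  also have "\<dots> = push_keys h p + push_keys h q"
    by (simp add: lookup_add single_add sum.distrib push_keys_superset[symmetric])
  finally show ?thesis .
qed

lemma push_keys_sum: "push_keys h (sum f S) = (\<Sum>x\<in>S. push_keys h (f x))"
  by (induction S rule: infinite_finite_induct) (simp_all add: push_keys_add)

lemma push_keys_comp: "push_keys g (push_keys h p) = push_keys (g \<circ> h) p"
  by (simp add: push_keys_def[of h] push_keys_sum push_keys_def[of "g \<circ> h"])

lemma comm_ring_hom_push_keys:
  fixes h :: "'a::cancel_comm_monoid_add \<Rightarrow> 'b::cancel_comm_monoid_add"
  assumes "\<And>a b. h (a + b) = h a + h b"
  shows "comm_ring_hom (push_keys h :: ('a \<Rightarrow>\<^sub>0 'c::comm_ring_1) \<Rightarrow> _)"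
proof (rule comm_ring_hom_poly_mappingI)
  have "h 0 = 0" using assms[of 0 0] by simp
  then show "push_keys h 1 = (1 :: 'b \<Rightarrow>\<^sub>0 'c)"
    using push_keys_single[of h 0 "1::'c"] by simp
qed (simp_all add: push_keys_add mult_single assms)

lemma lookup_push_keys_inj:
  assumes "inj h"
  shows "Poly_Mapping.lookup (push_keys h p) (h a) = Poly_Mapping.lookup p a"
  unfolding push_keys_def lookup_sum lookup_single when_def
  using injD[OF assms] by (simp add: inj_eq[OF assms] sum.delta in_keys_iff)

lemma lookup_push_keys_notin_range:
  assumes "x \<notin> range h"
  shows "Poly_Mapping.lookup (push_keys h p) x = 0"
  unfolding push_keys_def lookup_sum lookup_single when_def
  using assms by (intro sum.neutral) auto

lemma var_pow_add: "var_pow i (e + f) = var_pow i e * var_pow i f"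
  by (simp add: var_pow_def mult_single single_add)

lemma var_pow_0 [simp]: "var_pow i 0 = 1"
  by (simp add: var_pow_def)

lemma var_pow_neg_mult: "var_pow i (- e) * var_pow i e = 1"
  by (simp flip: var_pow_add)

lemma lookup_lscale: "Poly_Mapping.lookup (lscale c p) x = c * Poly_Mapping.lookup p x"
  by (simp add: lscale_def map.rep_eq when_def)

lemma lscale_conv_mult: "lscale c p = Poly_Mapping.single 0 c * p"
  by (simp add: lscale_def mult_map_scale_conv_mult)

lemma lscale_sum: "lscale c (sum f S) = (\<Sum>x\<in>S. lscale c (f x))"
  by (simp add: lscale_conv_mult sum_distrib_left)

lemma lscale_mult_lscale: "lscale a p * lscale b q = lscale (a * b) (p * q)"
  by (simp add: lscale_conv_mult mult_single ac_simps)

lemma lookup_lstar: "Poly_Mapping.lookup (lstar p) x = cnj (Poly_Mapping.lookup p (- x))"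
proof -
  have "Poly_Mapping.lookup (lstar p) x =
      (\<Sum>a\<in>Poly_Mapping.keys p. if a = - x then cnj (Poly_Mapping.lookup p a) else 0)"
    unfolding lstar_def lookup_sum lookup_single when_def by (intro sum.cong) auto
  then show ?thesis by (simp add: sum.delta in_keys_iff)
qed

lemma lstar_single [simp]: "lstar (Poly_Mapping.single a c) = Poly_Mapping.single (- a) (cnj c)"
  by (rule poly_mapping_eqI) (auto simp: lookup_lstar lookup_single when_def)

interpretation lstar: comm_ring_hom lstar
proof (rule comm_ring_hom_poly_mappingI)
  show "lstar (p + q) = lstar p + lstar q" for p q
    by (rule poly_mapping_eqI) (simp add: lookup_lstar lookup_add)
  show "lstar 1 = 1"
    using lstar_single[of 0 1] by simp
qed (simp add: mult_single)

lemma lstar_var_pow [simp]: "lstar (var_pow i e) = var_pow i (- e)"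
  by (simp add: var_pow_def single_uminus)

lemma lstar_lscale: "lstar (lscale c p) = lscale (cnj c) (lstar p)"
  by (rule poly_mapping_eqI) (simp add: lookup_lstar lookup_lscale)

lemma const_term_mult_single: "const_term (p * Poly_Mapping.single e c) = Poly_Mapping.lookup p (- e) * c"
  using lookup_mult_single[of p e c "- e"] by (simp add: const_term_def)

lemma const_term_zero [simp]: "const_term 0 = 0"
  by (simp add: const_term_def)

lemma const_term_sum: "const_term (sum f S) = (\<Sum>x\<in>S. const_term (f x))"
  by (simp add: const_term_def lookup_sum)

lemma const_term_mult_lscale: "const_term (p * lscale c q) = c * const_term (p * q)"
proof -
  have "p * lscale c q = lscale c (p * q)"
    by (simp add: lscale_conv_mult ac_simps)
  then show ?thesis
    by (simp add: const_term_def lookup_lscale)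
qed

definition mon_eval :: "(nat \<Rightarrow>\<^sub>0 int) \<Rightarrow> (nat \<Rightarrow> complex) \<Rightarrow> complex" where
  "mon_eval a w = (\<Prod>i\<in>Poly_Mapping.keys a. w i powi Poly_Mapping.lookup a i)"

lemma mon_eval_superset:
  assumes "finite S" "Poly_Mapping.keys a \<subseteq> S"
  shows "mon_eval a w = (\<Prod>i\<in>S. w i powi Poly_Mapping.lookup a i)"
  unfolding mon_eval_def using assms
  by (intro prod.mono_neutral_left) (auto simp: in_keys_iff)

lemma mon_eval_add:
  assumes "\<forall>i. w i \<noteq> 0"
  shows "mon_eval (a + b) w = mon_eval a w * mon_eval b w"
proof -
  let ?S = "Poly_Mapping.keys a \<union> Poly_Mapping.keys b"
  have "mon_eval (a + b) w = (\<Prod>i\<in>?S. w i powi Poly_Mapping.lookup (a + b) i)"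
    by (rule mon_eval_superset) (auto dest: set_mp[OF keys_add])
  also have "\<dots> = mon_eval a w * mon_eval b w"
    using assms by (simp add: lookup_add power_int_add prod.distrib mon_eval_superset[symmetric])
  finally show ?thesis .
qed

lemma mon_eval_zero [simp]: "mon_eval 0 w = 1"
  by (simp add: mon_eval_def)

lemma mon_eval_single [simp]: "mon_eval (Poly_Mapping.single i e) w = w i powi e"
  by (simp add: mon_eval_def)

lemma mon_eval_upd:
  "mon_eval a (g(m := z)) = mon_eval a (g(m := 1)) * z powi Poly_Mapping.lookup a m"
proof -
  have "mon_eval a h = h m powi Poly_Mapping.lookup a m *
      (\<Prod>i\<in>Poly_Mapping.keys a - {m}. h i powi Poly_Mapping.lookup a i)" for h
    by (cases "m \<in> Poly_Mapping.keys a")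
      (simp_all add: mon_eval_def prod.remove in_keys_iff)
  from this[of "g(m := z)"] this[of "g(m := 1)"] show ?thesis
    by (simp add: mult.commute)
qed

lemma mon_eval_upd_eq:
  "Poly_Mapping.lookup a m = 0 \<Longrightarrow> mon_eval a (g(m := z)) = mon_eval a g"
  unfolding mon_eval_def by (intro prod.cong) (auto simp: in_keys_iff)

lemma leval_superset:
  assumes "finite S" "Poly_Mapping.keys p \<subseteq> S"
  shows "leval p w = (\<Sum>a\<in>S. Poly_Mapping.lookup p a * mon_eval a w)"
  unfolding leval_def mon_eval_def[symmetric] using assms
  by (intro sum.mono_neutral_left) (auto simp: in_keys_iff)

lemma leval_single [simp]: "leval (Poly_Mapping.single a c) w = c * mon_eval a w"
  by (simp add: leval_def mon_eval_def)

lemma leval_add: "leval (p + q) w = leval p w + leval q w"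
proof -
  let ?S = "Poly_Mapping.keys p \<union> Poly_Mapping.keys q"
  have "leval (p + q) w = (\<Sum>a\<in>?S. Poly_Mapping.lookup (p + q) a * mon_eval a w)"
    by (rule leval_superset) (auto dest: set_mp[OF keys_add])
  then show ?thesis
    by (simp add: lookup_add distrib_right sum.distrib leval_superset[symmetric])
qed

lemma leval_zero [simp]: "leval 0 w = 0"
  by (simp add: leval_def)

lemma leval_sum: "leval (sum f S) w = (\<Sum>x\<in>S. leval (f x) w)"
  by (induction S rule: infinite_finite_induct) (simp_all add: leval_add)

lemma comm_ring_hom_leval:
  assumes "\<forall>i. w i \<noteq> 0"
  shows "comm_ring_hom (\<lambda>p. leval p w)"
proof (rule comm_ring_hom_poly_mappingI)
  show "leval 1 w = 1"
    using leval_single[of 0 1 w] by simp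
qed (simp_all add: leval_add mult_single mon_eval_add[OF assms])

lemma leval_var_pow [simp]: "leval (var_pow i e) w = w i powi e"
  by (simp add: var_pow_def)

lemma leval_lstar: "leval (lstar p) w = leval_bar_inv p w"
proof -
  have "mon_eval (- a) w = (\<Prod>i\<in>Poly_Mapping.keys a. inverse (w i) powi Poly_Mapping.lookup a i)" for a
    by (simp add: mon_eval_def power_int_minus power_int_inverse)
  then show ?thesis
    by (simp add: lstar_def leval_sum leval_bar_inv_def)
qed

lemma in_vars_add: "in_vars n p \<Longrightarrow> in_vars n q \<Longrightarrow> in_vars n (p + q)"
  unfolding in_vars_def
proof
  fix a assume p: "\<forall>a\<in>Poly_Mapping.keys p. Poly_Mapping.keys a \<subseteq> {..<n}"
    and q: "\<forall>a\<in>Poly_Mapping.keys q. Poly_Mapping.keys a \<subseteq> {..<n}"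
    and a: "a \<in> Poly_Mapping.keys (p + q)"
  from a have "a \<in> Poly_Mapping.keys p \<union> Poly_Mapping.keys q"
    by (rule subsetD[OF keys_add])
  then show "Poly_Mapping.keys a \<subseteq> {..<n}" using p q by blast
qed

lemma in_vars_mult: "in_vars n p \<Longrightarrow> in_vars n q \<Longrightarrow> in_vars n (p * q)"
  unfolding in_vars_def
proof
  fix a assume p: "\<forall>a\<in>Poly_Mapping.keys p. Poly_Mapping.keys a \<subseteq> {..<n}"
    and q: "\<forall>a\<in>Poly_Mapping.keys q. Poly_Mapping.keys a \<subseteq> {..<n}"
    and a: "a \<in> Poly_Mapping.keys (p * q)"
  have "a \<in> {x + y |x y. x \<in> Poly_Mapping.keys p \<and> y \<in> Poly_Mapping.keys q}"
    using a keys_mult[of p q] by (rule subsetD[rotated])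
  then obtain x y where xy: "a = x + y" "x \<in> Poly_Mapping.keys p" "y \<in> Poly_Mapping.keys q"
    by auto
  have "Poly_Mapping.keys a \<subseteq> Poly_Mapping.keys x \<union> Poly_Mapping.keys y"
    unfolding xy(1) by (rule keys_add)
  then show "Poly_Mapping.keys a \<subseteq> {..<n}" using p q xy by auto
qed

lemma in_vars_uminus: "in_vars n p \<Longrightarrow> in_vars n (- p)"
  by (simp add: in_vars_def)

lemma in_vars_diff: "in_vars n p \<Longrightarrow> in_vars n q \<Longrightarrow> in_vars n (p - q)"
  using in_vars_add[of n p "- q"] in_vars_uminus[of n q] by simp

lemma in_vars_zero [simp]: "in_vars n 0"
  by (simp add: in_vars_def)

lemma in_vars_one [simp]: "in_vars n 1"
  by (simp add: in_vars_def)

lemma in_vars_power: "in_vars n p \<Longrightarrow> in_vars n (p ^ k)"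
  by (induction k) (simp_all add: in_vars_mult)

lemma in_vars_sum: "(\<And>x. x \<in> S \<Longrightarrow> in_vars n (f x)) \<Longrightarrow> in_vars n (sum f S)"
  by (induction S rule: infinite_finite_induct) (simp_all add: in_vars_add)

lemma in_vars_prod: "(\<And>x. x \<in> S \<Longrightarrow> in_vars n (f x)) \<Longrightarrow> in_vars n (prod f S)"
  by (induction S rule: infinite_finite_induct) (simp_all add: in_vars_mult)

lemma in_vars_lstar: "in_vars n p \<Longrightarrow> in_vars n (lstar p)"
  unfolding in_vars_def
proof
  fix a assume "\<forall>a\<in>Poly_Mapping.keys p. Poly_Mapping.keys a \<subseteq> {..<n}"
    and "a \<in> Poly_Mapping.keys (lstar p)"
  moreover from this(2) have "- a \<in> Poly_Mapping.keys p"
    by (simp add: in_keys_iff lookup_lstar)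
  ultimately show "Poly_Mapping.keys a \<subseteq> {..<n}"
    by (metis keys_minus)
qed

lemma in_vars_var_pow: "i < n \<Longrightarrow> in_vars n (var_pow i e)"
  by (simp add: in_vars_def var_pow_def)

lemma leval_in_vars: "in_vars n p \<Longrightarrow> (\<And>i. i < n \<Longrightarrow> w i = w' i) \<Longrightarrow> leval p w = leval p w'"
  unfolding leval_def in_vars_def
  by (intro sum.cong refl arg_cong2[where f = "(*)"] prod.cong) (metis lessThan_iff subsetD)

lemma swap_exp_eq_push_keys: "swap_exp i j = push_keys (Transposition.transpose i j)"
  by (simp add: fun_eq_iff swap_exp_def push_keys_def)

lemma Kswap_eq_push_keys: "Kswap i j = push_keys (swap_exp i j)"
  by (simp add: fun_eq_iff Kswap_def push_keys_def)

lemma lookup_swap_exp: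
  "Poly_Mapping.lookup (swap_exp i j a) l = Poly_Mapping.lookup a (Transposition.transpose i j l)"
  using lookup_push_keys_inj[of "Transposition.transpose i j" a "Transposition.transpose i j l"]
  by (simp add: swap_exp_eq_push_keys)

lemma swap_exp_swap_exp [simp]: "swap_exp i j (swap_exp i j a) = a"
  by (rule poly_mapping_eqI) (simp add: lookup_swap_exp)

lemma lookup_Kswap_swap_exp:
  "Poly_Mapping.lookup (Kswap i j p) (swap_exp i j a) = Poly_Mapping.lookup p a"
proof -
  have "inj (swap_exp i j)" by (metis injI swap_exp_swap_exp)
  then show ?thesis by (simp add: Kswap_eq_push_keys lookup_push_keys_inj)
qed

lemma transpose_less_iff:
  "i < n \<Longrightarrow> j < n \<Longrightarrow> Transposition.transpose i j l < n \<longleftrightarrow> l < n"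
  by (cases "l = i"; cases "l = j") auto

section \<open>Torus integrals extract constant terms\<close>

lemma has_contour_integral_unit_circle_powi:
  "((\<lambda>z. z powi k / (2 * of_real pi * \<i> * z)) has_contour_integral (if k = 0 then 1 else 0))
    (circlepath 0 1)"
proof (cases "k = 0")
  case True
  have "((\<lambda>u. (\<lambda>_. 1 / (2 * of_real pi * \<i>)) u / (u - 0)) has_contour_integral
      (2 * of_real pi * \<i> * (1 / (2 * of_real pi * \<i>)))) (circlepath 0 1)"
    by (rule Cauchy_integral_circlepath_simple) auto
  then show ?thesis
    using True by (auto simp: field_simps elim!: has_contour_integral_eq)
next
  case False
  have "((\<lambda>z. z powi (k - 1) / (2 * of_real pi * \<i>)) has_contour_integral 0) (circlepath 0 1)"
  proof (rule Cauchy_theorem_primitive[where S = "- {0}"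
        and f = "\<lambda>z. z powi k / (of_int k * (2 * of_real pi * \<i>))"])
    fix x :: complex assume "x \<in> - {0}"
    then show "((\<lambda>z. z powi k / (of_int k * (2 * of_real pi * \<i>))) has_field_derivative
        x powi (k - 1) / (2 * of_real pi * \<i>)) (at x within - {0})"
      using False by (auto intro!: derivative_eq_intros simp: field_simps)
  qed auto
  then have "((\<lambda>z. z powi k / (2 * of_real pi * \<i> * z)) has_contour_integral 0) (circlepath 0 1)"
  proof (rule has_contour_integral_eq)
    fix x assume "x \<in> path_image (circlepath (0::complex) 1)"
    then have "x \<noteq> 0" by auto
    then show "x powi (k - 1) / (2 * of_real pi * \<i>) = x powi k / (2 * of_real pi * \<i> * x)"
      using False by (simp add: power_int_diff field_simps)
  qed
  then show ?thesis using False by simp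
qed

lemma torus_int_cong:
  assumes "\<And>w. \<forall>i. w i \<noteq> 0 \<Longrightarrow> h1 w = h2 w"
  shows "torus_int m h1 = torus_int m h2"
  using assms
proof (induction m arbitrary: h1 h2)
  case (Suc m)
  have "torus_int m (\<lambda>w. h1 (w(m := z))) = torus_int m (\<lambda>w. h2 (w(m := z)))" if "z \<noteq> 0" for z
    by (rule Suc.IH) (use that Suc.prems in auto)
  then have "(\<lambda>z. torus_int m (\<lambda>w. h1 (w(m := z))) / (2 * of_real pi * \<i> * z)) =
      (\<lambda>z. torus_int m (\<lambda>w. h2 (w(m := z))) / (2 * of_real pi * \<i> * z))"
    by fastforce
  then show ?case by simp
qed simp

lemma has_contour_integral_unit_circle_sum_powi:
  assumes "finite K"
  shows "((\<lambda>z. (\<Sum>a\<in>K. c a * z powi e a) / (2 * of_real pi * \<i> * z)) has_contour_integral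
    (\<Sum>a\<in>K. if e a = 0 then c a else 0)) (circlepath 0 1)"
proof -
  have "((\<lambda>z. \<Sum>a\<in>K. c a * (z powi e a / (2 * of_real pi * \<i> * z))) has_contour_integral
      (\<Sum>a\<in>K. c a * (if e a = 0 then 1 else 0))) (circlepath 0 1)"
    using assms by (intro has_contour_integral_sum has_contour_integral_lmul
        has_contour_integral_unit_circle_powi)
  then show ?thesis
    by (simp add: sum_divide_distrib if_distrib[of "(*) _"] cong: if_cong)
qed

text \<open>
  \<open>torus_int m\<close> integrates over the variables below \<open>m\<close> only; the others are frozen at
  nonzero values \<open>g\<close> (at \<open>1\<close> in \<open>torus_int\<close> itself).
\<close>

lemma torus_int_leval:
  assumes "\<forall>i. g i \<noteq> 0"
  shows "torus_int m (\<lambda>w. leval p (\<lambda>i. if i < m then w i else g i)) =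
    (\<Sum>a\<in>{a\<in>Poly_Mapping.keys p. \<forall>i<m. Poly_Mapping.lookup a i = 0}.
      Poly_Mapping.lookup p a * mon_eval a g)"
  using assms
proof (induction m arbitrary: g)
  case 0
  then show ?case by (simp add: leval_def mon_eval_def)
next
  case (Suc m)
  let ?K = "{a\<in>Poly_Mapping.keys p. \<forall>i<m. Poly_Mapping.lookup a i = 0}"
  let ?c = "\<lambda>a. Poly_Mapping.lookup p a * mon_eval a (g(m := 1))"
  have inner: "torus_int m (\<lambda>w. leval p (\<lambda>i. if i < Suc m then (w(m := z)) i else g i)) =
      (\<Sum>a\<in>?K. ?c a * z powi Poly_Mapping.lookup a m)" if "z \<noteq> 0" for z
  proof -
    have "(\<lambda>i. if i < Suc m then (w(m := z)) i else g i) = (\<lambda>i. if i < m then w i else (g(m := z)) i)" for w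
      by (auto simp: fun_eq_iff)
    then have "torus_int m (\<lambda>w. leval p (\<lambda>i. if i < Suc m then (w(m := z)) i else g i)) =
        torus_int m (\<lambda>w. leval p (\<lambda>i. if i < m then w i else (g(m := z)) i))"
      by (simp only:)
    also have "\<dots> = (\<Sum>a\<in>?K. Poly_Mapping.lookup p a * mon_eval a (g(m := z)))"
      by (rule Suc.IH) (use that Suc.prems in auto)
    finally show ?thesis
      by (simp only: mon_eval_upd[of _ g m z] mult.assoc)
  qed
  have "(\<lambda>z. torus_int m (\<lambda>w. leval p (\<lambda>i. if i < Suc m then (w(m := z)) i else g i))
        / (2 * of_real pi * \<i> * z)) =
      (\<lambda>z. (\<Sum>a\<in>?K. ?c a * z powi Poly_Mapping.lookup a m) / (2 * of_real pi * \<i> * z))"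
  proof
    fix z :: complex
    show "torus_int m (\<lambda>w. leval p (\<lambda>i. if i < Suc m then (w(m := z)) i else g i))
        / (2 * of_real pi * \<i> * z) =
      (\<Sum>a\<in>?K. ?c a * z powi Poly_Mapping.lookup a m) / (2 * of_real pi * \<i> * z)"
      by (cases "z = 0") (simp_all add: inner)
  qed
  then have "torus_int (Suc m) (\<lambda>w. leval p (\<lambda>i. if i < Suc m then w i else g i)) =
      (\<Sum>a\<in>?K. if Poly_Mapping.lookup a m = 0 then ?c a else 0)"
    using has_contour_integral_unit_circle_sum_powi[of ?K ?c "\<lambda>a. Poly_Mapping.lookup a m"]
    by (simp add: contour_integral_unique)
  also have "\<dots> = (\<Sum>a\<in>{a\<in>Poly_Mapping.keys p. \<forall>i<Suc m. Poly_Mapping.lookup a i = 0}.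
      Poly_Mapping.lookup p a * mon_eval a g)"
    by (subst sum.inter_filter[symmetric]) (auto intro!: sum.cong simp: less_Suc_eq mon_eval_upd_eq)
  finally show ?case .
qed

lemma torus_int_leval_eq_const_term:
  assumes "in_vars m p"
  shows "torus_int m (leval p) = const_term p"
proof -
  have zero: "a = 0" if "a \<in> Poly_Mapping.keys p" "\<forall>i<m. Poly_Mapping.lookup a i = 0" for a
    using that assms unfolding in_vars_def
    by (metis in_keys_iff lessThan_iff lookup_zero poly_mapping_eqI subsetD)
  have "torus_int m (leval p) = torus_int m (\<lambda>w. leval p (\<lambda>i. if i < m then w i else 1))"
    by (rule arg_cong[where f = "torus_int m"]) (auto intro!: leval_in_vars[OF assms])
  also have "\<dots> = (\<Sum>a\<in>{a\<in>Poly_Mapping.keys p. \<forall>i<m. Poly_Mapping.lookup a i = 0}.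
      Poly_Mapping.lookup p a * mon_eval a (\<lambda>_. 1))"
    by (rule torus_int_leval) simp
  also have "\<dots> = (\<Sum>a\<in>Poly_Mapping.keys p \<inter> {0}. Poly_Mapping.lookup p a)"
    by (rule sum.cong) (auto simp: zero)
  also have "\<dots> = const_term p"
    by (cases "0 \<in> Poly_Mapping.keys p") (auto simp: const_term_def in_keys_iff)
  finally show ?thesis .
qed

definition torus_weight :: "nat \<Rightarrow> nat \<Rightarrow> lpoly" where
  "torus_weight b n = (\<Prod>i<n. \<Prod>j\<in>{..<n} - {i}. (1 - var_pow i 1 * var_pow j (-1)) ^ b)"

definition tensor_pairing :: "nat \<Rightarrow> nat \<Rightarrow> ((nat \<Rightarrow> nat) \<Rightarrow> lpoly) \<Rightarrow> ((nat \<Rightarrow> nat) \<Rightarrow> lpoly) \<Rightarrow> lpoly" where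
  "tensor_pairing N n F G = (\<Sum>c\<in>tidx N n. lstar (F c) * G c)"

lemma finite_tidx: "finite (tidx N n)"
proof (rule finite_subset[OF _ finite_set_of_finite_funs[of "{..<n}" "{1..N}" 0]])
  show "tidx N n \<subseteq> {f. \<forall>x. (x \<in> {..<n} \<longrightarrow> f x \<in> {1..N}) \<and> (x \<notin> {..<n} \<longrightarrow> f x = 0)}"
    unfolding tidx_def by (auto simp: not_less)
qed auto

lemma ip_z_eq_const_term:
  assumes "F \<in> tspace N n" "G \<in> tspace N n"
  shows "ip_z b N n F G = inverse (fact n) * const_term (torus_weight b n * tensor_pairing N n F G)"
proof -
  let ?Q = "torus_weight b n * tensor_pairing N n F G"
  have "leval ?Q w = (\<Prod>i<n. \<Prod>j\<in>{..<n} - {i}. (1 - w i * inverse (w j)) ^ b) *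
      (\<Sum>c\<in>tidx N n. leval_bar_inv (F c) w * leval (G c) w)" if "\<forall>i. w i \<noteq> 0" for w
  proof -
    interpret ev: comm_ring_hom "\<lambda>p. leval p w"
      using that by (rule comm_ring_hom_leval)
    show ?thesis
      by (simp add: torus_weight_def tensor_pairing_def ev.hom_prod ev.hom_power ev.hom_diff
          ev.hom_mult ev.hom_one ev.hom_sum leval_lstar power_int_minus)
  qed
  then have "ip_z b N n F G = inverse (fact n) * torus_int n (leval ?Q)"
    unfolding ip_z_def by (metis (no_types, lifting) torus_int_cong)
  moreover have "in_vars n ?Q"
    using assms unfolding torus_weight_def tensor_pairing_def tspace_def
    by (intro in_vars_mult in_vars_prod in_vars_sum in_vars_lstar in_vars_power
        in_vars_diff in_vars_one in_vars_var_pow) auto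
  ultimately show ?thesis
    by (simp add: torus_int_leval_eq_const_term)
qed

section \<open>Coordinates in the basis \<open>\<hat>u\<^sub>k\<close>\<close>

lemma ul_bounds:
  assumes "N \<ge> 1" shows "1 \<le> ul N k" "ul N k \<le> int N"
proof -
  have "0 \<le> (k - 1) mod int N" "(k - 1) mod int N < int N" using assms by simp_all
  then show "1 \<le> ul N k" "ul N k \<le> int N" by (simp_all add: ul_def)
qed

lemma ul_ol_decomp:
  assumes "N \<ge> 1" shows "k = ul N k - int N * ol N k"
proof -
  have "ul N k - k = int N * (- ((k - 1) div int N))"
    unfolding ul_def using div_mult_mod_eq[of "k - 1" "int N"] by (simp add: algebra_simps)
  then show ?thesis
    using assms by (simp add: ol_def)
qed

lemma ul_label_shift:
  assumes "N \<ge> 1" "c \<in> {1..N}"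
  shows "ul N (int c - int N * m) = int c"
proof -
  have "(int c - 1 + int N * (- m)) mod int N = (int c - 1) mod int N"
    by (rule mod_mult_self2)
  also have "\<dots> = int c - 1" using assms by (intro mod_pos_pos_trivial) auto
  finally show ?thesis by (simp add: ul_def algebra_simps)
qed

lemma ol_label_shift:
  assumes "N \<ge> 1" "c \<in> {1..N}"
  shows "ol N (int c - int N * m) = m"
  using assms by (simp add: ol_def ul_label_shift)

definition intvecs :: "nat \<Rightarrow> (nat \<Rightarrow> int) set" where
  "intvecs n = {k. \<forall>i\<ge>n. k i = 0}"

definition tlabel :: "nat \<Rightarrow> nat \<Rightarrow> (nat \<Rightarrow> int) \<Rightarrow> (nat \<Rightarrow> nat)" where
  "tlabel N n k = (\<lambda>i. if i < n then nat (ul N (k i)) else 0)"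

definition zexp :: "nat \<Rightarrow> nat \<Rightarrow> (nat \<Rightarrow> int) \<Rightarrow> (nat \<Rightarrow>\<^sub>0 int)" where
  "zexp N n k = (\<Sum>i<n. Poly_Mapping.single i (ol N (k i)))"

definition tindex :: "nat \<Rightarrow> nat \<Rightarrow> (nat \<Rightarrow> nat) \<Rightarrow> (nat \<Rightarrow>\<^sub>0 int) \<Rightarrow> (nat \<Rightarrow> int)" where
  "tindex N n c a = (\<lambda>i. if i < n then int (c i) - int N * Poly_Mapping.lookup a i else 0)"

lemma lookup_zexp: "Poly_Mapping.lookup (zexp N n k) i = (if i < n then ol N (k i) else 0)"
  unfolding zexp_def lookup_sum lookup_single when_def
  by (cases "i < n") (auto simp: sum.delta)

lemma keys_zexp: "Poly_Mapping.keys (zexp N n k) \<subseteq> {..<n}"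
  by (auto simp: in_keys_iff lookup_zexp split: if_splits)

lemma tlabel_in_tidx:
  assumes "N \<ge> 1" shows "tlabel N n k \<in> tidx N n"
proof -
  have "nat (ul N (k i)) \<in> {1..N}" for i using ul_bounds[OF assms, of "k i"] by auto
  then show ?thesis unfolding tidx_def tlabel_def by simp
qed

lemma tindex_in_intvecs: "tindex N n c a \<in> intvecs n"
  by (simp add: tindex_def intvecs_def)

lemma tlabel_tindex: "N \<ge> 1 \<Longrightarrow> c \<in> tidx N n \<Longrightarrow> tlabel N n (tindex N n c a) = c"
  by (auto simp: fun_eq_iff tlabel_def tindex_def tidx_def ul_label_shift)

lemma zexp_tindex:
  assumes "N \<ge> 1" "c \<in> tidx N n" "Poly_Mapping.keys a \<subseteq> {..<n}"
  shows "zexp N n (tindex N n c a) = a"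
proof (rule poly_mapping_eqI)
  fix i
  show "Poly_Mapping.lookup (zexp N n (tindex N n c a)) i = Poly_Mapping.lookup a i"
    using assms by (cases "i < n")
      (auto simp: lookup_zexp tindex_def tidx_def ol_label_shift in_keys_iff)
qed

lemma tindex_tlabel_zexp:
  assumes "N \<ge> 1" "k \<in> intvecs n"
  shows "tindex N n (tlabel N n k) (zexp N n k) = k"
proof
  fix i
  have "int (nat (ul N (k i))) = ul N (k i)" using ul_bounds[OF assms(1), of "k i"] by simp
  then show "tindex N n (tlabel N n k) (zexp N n k) i = k i"
    using assms ul_ol_decomp[OF assms(1), of "k i"]
    by (simp add: tindex_def tlabel_def lookup_zexp intvecs_def)
qed

lemma tlabel_zexp_inj:
  assumes "N \<ge> 1" "k \<in> intvecs n" "k' \<in> intvecs n"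
    and "tlabel N n k = tlabel N n k'" "zexp N n k = zexp N n k'"
  shows "k = k'"
  using tindex_tlabel_zexp[OF assms(1,2)] tindex_tlabel_zexp[OF assms(1,3)] assms(4,5) by metis

lemma tlabel_comp_transpose:
  "i < n \<Longrightarrow> j < n \<Longrightarrow>
    tlabel N n (k \<circ> Transposition.transpose i j) = tlabel N n k \<circ> Transposition.transpose i j"
  by (auto simp: tlabel_def fun_eq_iff transpose_less_iff)

lemma zexp_comp_transpose:
  "i < n \<Longrightarrow> j < n \<Longrightarrow> zexp N n (k \<circ> Transposition.transpose i j) = swap_exp i j (zexp N n k)"
  by (rule poly_mapping_eqI) (auto simp: lookup_zexp lookup_swap_exp transpose_less_iff)

lemma uhat_eq: "uhat N n k c = (\<Sum>w | w permutes {..<n}.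
    if c = tlabel N n (k \<circ> w) then Poly_Mapping.single (zexp N n (k \<circ> w)) (of_int (sign w)) else 0)"
  unfolding uhat_def tlabel_def zexp_def comp_def ..

lemma lookup_uhat: "Poly_Mapping.lookup (uhat N n k c) a = (\<Sum>w | w permutes {..<n}.
    if c = tlabel N n (k \<circ> w) \<and> a = zexp N n (k \<circ> w) then of_int (sign w) else 0)"
  unfolding uhat_eq lookup_sum by (intro sum.cong) (auto simp: lookup_single when_def)

lemma decseqs_subset_intvecs: "decseqs n \<subseteq> intvecs n"
  by (auto simp: decseqs_def intvecs_def)

lemma intvecs_comp_permutes: "k \<in> intvecs n \<Longrightarrow> w permutes {..<n} \<Longrightarrow> k \<circ> w \<in> intvecs n"
  by (auto simp: intvecs_def permutes_not_in)

lemma decseqs_less_iff: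
  assumes "k \<in> decseqs n" "i < n" "j < n"
  shows "k i < k j \<longleftrightarrow> j < i"
proof -
  have "k j < k i" if "i < j" "j < n" for i j
    using assms(1) that by (simp add: decseqs_def)
  from this[of i j] this[of j i] show ?thesis
    using assms(2,3) by (cases i j rule: linorder_cases) auto
qed

lemma permutes_strict_mono_eq_id:
  fixes \<pi> :: "nat \<Rightarrow> nat"
  assumes perm: "\<pi> permutes {..<n}" and mono: "\<And>p q. p < q \<Longrightarrow> q < n \<Longrightarrow> \<pi> p < \<pi> q"
  shows "\<pi> = id"
proof -
  have ge: "p \<le> \<pi> p" if "p < n" for p
    using that by (induction p) (use mono in force)+
  have "\<pi> p = p" if "p < n" for p
  proof (rule ccontr)
    assume "\<pi> p \<noteq> p"
    then have "p < \<pi> p" using ge[OF that] by simp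
    then have "(\<Sum>x<n. x) < (\<Sum>x<n. \<pi> x)"
      using ge that by (intro sum_strict_mono_ex1) auto
    also have "\<dots> = (\<Sum>x<n. x)"
      using sum.reindex_bij_betw[OF permutes_imp_bij[OF perm], of "\<lambda>x. x"] by simp
    finally show False by simp
  qed
  then show ?thesis
    using permutes_not_in[OF perm] by (metis eq_id_iff lessThan_iff)
qed

lemma decseqs_comp_permutes_unique:
  assumes k: "k \<in> decseqs n" and k': "k' \<in> decseqs n"
    and w: "w permutes {..<n}" and w': "w' permutes {..<n}" and eq: "k \<circ> w = k' \<circ> w'"
  shows "k = k'" and "w = w'"
proof -
  define \<pi> where "\<pi> = w' \<circ> inv w"
  have perm: "\<pi> permutes {..<n}"
    unfolding \<pi>_def by (intro permutes_compose permutes_inv w w')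
  have kk': "k p = k' (\<pi> p)" for p
    using fun_cong[OF eq, of "inv w p"] by (simp add: \<pi>_def permutes_inverses(1)[OF w])
  have "\<pi> p < \<pi> q" if "p < q" "q < n" for p q
  proof -
    have "k q < k p" using decseqs_less_iff[OF k, of q p] that by simp
    moreover have "\<pi> p < n" "\<pi> q < n"
      using that permutes_in_image[OF perm] by auto
    ultimately show ?thesis using decseqs_less_iff[OF k', of "\<pi> q" "\<pi> p"] by (simp add: kk')
  qed
  then have "\<pi> = id" by (rule permutes_strict_mono_eq_id[OF perm])
  moreover have "\<pi> \<circ> w = w'"
    by (simp add: \<pi>_def comp_assoc permutes_inv_o(2)[OF w])
  ultimately show "w = w'" by simp
  show "k = k'"
    using kk' \<open>\<pi> = id\<close> k k' by (auto simp: fun_eq_iff decseqs_def)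
qed

definition desc_rank :: "nat \<Rightarrow> (nat \<Rightarrow> int) \<Rightarrow> nat \<Rightarrow> nat" where
  "desc_rank n k i = (if i < n then card {j\<in>{..<n}. k i < k j} else i)"

lemma desc_rank_less: "i < n \<Longrightarrow> desc_rank n k i < n"
proof -
  assume i: "i < n"
  have "card {j\<in>{..<n}. k i < k j} \<le> card ({..<n} - {i})"
    by (intro card_mono) auto
  then show ?thesis using i by (simp add: desc_rank_def)
qed

lemma desc_rank_strict_antimono:
  assumes "i < n" "j < n" "k i < k j"
  shows "desc_rank n k j < desc_rank n k i"
proof -
  have "{l\<in>{..<n}. k j < k l} \<subset> {l\<in>{..<n}. k i < k l}"
    using assms by auto
  then show ?thesis
    using assms psubset_card_mono[of "{l\<in>{..<n}. k i < k l}"] by (simp add: desc_rank_def)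
qed

lemma desc_rank_permutes:
  assumes "inj_on k {..<n}"
  shows "desc_rank n k permutes {..<n}"
proof -
  have "inj_on (desc_rank n k) {..<n}"
  proof (rule inj_onI, rule ccontr)
    fix i j assume ij: "i \<in> {..<n}" "j \<in> {..<n}" "desc_rank n k i = desc_rank n k j" "i \<noteq> j"
    then have "k i < k j \<or> k j < k i"
      using inj_onD[OF assms] by (meson linorder_neqE)
    then show False
      using ij desc_rank_strict_antimono[of i n j k] desc_rank_strict_antimono[of j n i k] by auto
  qed
  moreover have "desc_rank n k ` {..<n} \<subseteq> {..<n}"
    using desc_rank_less by auto
  ultimately have "bij_betw (desc_rank n k) {..<n} {..<n}"
    by (simp add: bij_betw_def endo_inj_surj)
  then show ?thesis
    by (rule bij_imp_permutes) (simp add: desc_rank_def)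
qed

lemma decseqs_comp_permutes_exists:
  assumes k0: "k0 \<in> intvecs n" and inj: "inj_on k0 {..<n}"
  obtains k w where "k \<in> decseqs n" "w permutes {..<n}" "k \<circ> w = k0"
proof
  let ?r = "desc_rank n k0"
  have r: "?r permutes {..<n}" using desc_rank_permutes[OF inj] .
  define k where "k p = (if p < n then k0 (inv ?r p) else 0)" for p
  show "?r permutes {..<n}" by (fact r)
  show "k \<circ> ?r = k0"
    using k0 desc_rank_less permutes_inverses(2)[OF r]
    by (auto simp: fun_eq_iff k_def desc_rank_def intvecs_def)
  have "k q < k p" if "p < q" "q < n" for p q
  proof -
    have inv: "inv ?r p < n" "inv ?r q < n" "?r (inv ?r p) = p" "?r (inv ?r q) = q"
      using that permutes_in_image[OF permutes_inv[OF r]] permutes_inverses(1)[OF r] by auto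
    then have "k0 (inv ?r p) \<noteq> k0 (inv ?r q)"
      using that inj_onD[OF inj, of "inv ?r p" "inv ?r q"] by auto
    moreover have "\<not> k0 (inv ?r p) < k0 (inv ?r q)"
      using desc_rank_strict_antimono[of "inv ?r p" n "inv ?r q" k0] inv that by auto
    ultimately show ?thesis using that by (simp add: k_def)
  qed
  then show "k \<in> decseqs n" by (simp add: decseqs_def k_def)
qed

lemma sum_permutes_decseqs_eq:
  assumes "ks \<in> decseqs n" "ws permutes {..<n}" "k \<in> decseqs n"
  shows "(\<Sum>w | w permutes {..<n}. if k \<circ> w = ks \<circ> ws then X w else 0) = (if k = ks then X ws else 0)"
proof -
  have "(\<Sum>w | w permutes {..<n}. if k \<circ> w = ks \<circ> ws then X w else 0) =
      (\<Sum>w | w permutes {..<n}. if k = ks \<and> w = ws then X w else 0)"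
    using decseqs_comp_permutes_unique[OF assms(3,1) _ assms(2)] by (intro sum.cong) auto
  then show ?thesis
    using assms(2) by (simp add: sum.delta' finite_permutations)
qed

text \<open>The coefficient of \<open>\<hat>u\<^sub>k\<close> is read off from the monomial of \<open>\<hat>u\<^sub>k\<close> indexed by \<open>w = id\<close>.\<close>

definition ucoeff :: "nat \<Rightarrow> nat \<Rightarrow> ((nat \<Rightarrow> nat) \<Rightarrow> lpoly) \<Rightarrow> (nat \<Rightarrow> int) \<Rightarrow> complex" where
  "ucoeff N n f k = Poly_Mapping.lookup (f (tlabel N n k)) (zexp N n k)"

definition ucoeff_support :: "nat \<Rightarrow> nat \<Rightarrow> ((nat \<Rightarrow> nat) \<Rightarrow> lpoly) \<Rightarrow> (nat \<Rightarrow> int) set" where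
  "ucoeff_support N n f = {k \<in> decseqs n. ucoeff N n f k \<noteq> 0}"

lemma Fspace_Kswap:
  assumes "f \<in> Fspace N n" "i < n" "j < n" "i \<noteq> j"
  shows "Kswap i j (f c) = - f (c \<circ> Transposition.transpose i j)"
proof -
  have "Kt i j f c = (- Pt i j f) c" using assms by (simp add: Fspace_def)
  then show ?thesis by (simp add: Kt_def Pt_def)
qed

lemma ucoeff_comp_transpose:
  assumes f: "f \<in> Fspace N n" and ij: "i < n" "j < n" "i \<noteq> j"
  shows "ucoeff N n f (k \<circ> Transposition.transpose i j) = - ucoeff N n f k"
proof -
  have "ucoeff N n f k = Poly_Mapping.lookup (Kswap i j (f (tlabel N n k))) (swap_exp i j (zexp N n k))"
    by (simp add: ucoeff_def lookup_Kswap_swap_exp)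
  also have "\<dots> = - ucoeff N n f (k \<circ> Transposition.transpose i j)"
    by (simp add: Fspace_Kswap[OF f ij] ucoeff_def tlabel_comp_transpose[OF ij(1,2)]
        zexp_comp_transpose[OF ij(1,2)])
  finally show ?thesis by simp
qed

lemma ucoeff_comp_permutes:
  assumes f: "f \<in> Fspace N n" and w: "w permutes {..<n}"
  shows "ucoeff N n f (k \<circ> w) = of_int (sign w) * ucoeff N n f k"
  using w finite_lessThan[of n]
proof (induction arbitrary: k rule: permutes_induct)
  case (swap a b p)
  have "permutation p" using swap.hyps(4) by (rule permutes_imp_permutation[rotated]) simp
  then have sign: "sign (Transposition.transpose a b \<circ> p) = - sign p"
    using swap.hyps by (simp add: sign_compose permutation_swap_id sign_swap_id)
  have "ucoeff N n f (k \<circ> (Transposition.transpose a b \<circ> p)) =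
      of_int (sign p) * ucoeff N n f (k \<circ> Transposition.transpose a b)"
    unfolding comp_assoc[symmetric] by (rule swap.IH)
  also have "\<dots> = of_int (sign (Transposition.transpose a b \<circ> p)) * ucoeff N n f k"
    using ucoeff_comp_transpose[OF f, of a b k] swap.hyps sign by simp
  finally show ?case .
qed simp

lemma inj_on_if_ucoeff_nonzero:
  assumes f: "f \<in> Fspace N n" and "ucoeff N n f k \<noteq> 0"
  shows "inj_on k {..<n}"
proof (rule inj_onI, rule ccontr)
  fix i j assume ij: "i \<in> {..<n}" "j \<in> {..<n}" "k i = k j" "i \<noteq> j"
  then have "k \<circ> Transposition.transpose i j = k"
    by (auto simp: fun_eq_iff Transposition.transpose_def)
  then show False
    using ucoeff_comp_transpose[OF f, of i j k] ij assms(2) by simp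
qed

lemma finite_ucoeff_support:
  assumes N: "N \<ge> 1" and f: "f \<in> tspace N n"
  shows "finite (ucoeff_support N n f)"
proof -
  let ?h = "\<lambda>k. (tlabel N n k, zexp N n k)"
  have "inj_on ?h (ucoeff_support N n f)"
  proof (rule inj_onI)
    fix x y assume "x \<in> ucoeff_support N n f" "y \<in> ucoeff_support N n f" "?h x = ?h y"
    then show "x = y"
      using tlabel_zexp_inj[OF N, of x n y] decseqs_subset_intvecs by (auto simp: ucoeff_support_def)
  qed
  moreover have "?h ` ucoeff_support N n f \<subseteq> Sigma (tidx N n) (\<lambda>c. Poly_Mapping.keys (f c))"
    using tlabel_in_tidx[OF N] by (auto simp: ucoeff_support_def ucoeff_def in_keys_iff)
  moreover have "finite (Sigma (tidx N n) (\<lambda>c. Poly_Mapping.keys (f c)))"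
    using finite_tidx by (intro finite_SigmaI) auto
  ultimately show ?thesis
    by (meson finite_imageD finite_subset)
qed

lemma lookup_sum_ucoeff_uhat:
  assumes f: "f \<in> Fspace N n"
  shows "Poly_Mapping.lookup (\<Sum>k\<in>S. lscale (ucoeff N n f k) (uhat N n k c)) a =
    (\<Sum>k\<in>S. \<Sum>w | w permutes {..<n}.
      if c = tlabel N n (k \<circ> w) \<and> a = zexp N n (k \<circ> w) then ucoeff N n f (k \<circ> w) else 0)"
  unfolding lookup_sum lookup_lscale lookup_uhat sum_distrib_left
  by (intro sum.cong refl) (auto simp: ucoeff_comp_permutes[OF f])

text \<open>
  Sorting \<open>k\<^sub>0\<close> gives the only pair \<open>(k, w)\<close> with \<open>k \<circ> w = k\<^sub>0\<close>, and \<open>k\<close> lies in the support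
  unless the coefficient of \<open>k\<^sub>0\<close> vanishes.
\<close>

lemma sum_ucoeff_support_comp_permutes:
  assumes N: "N \<ge> 1" and f: "f \<in> Fspace N n" and k0: "k0 \<in> intvecs n"
  shows "(\<Sum>k\<in>ucoeff_support N n f. \<Sum>w | w permutes {..<n}.
      if k \<circ> w = k0 then ucoeff N n f k0 else 0) = ucoeff N n f k0"
proof (cases "ucoeff N n f k0 = 0")
  case False
  then obtain ks ws where ks: "ks \<in> decseqs n" and ws: "ws permutes {..<n}" and kw: "ks \<circ> ws = k0"
    using decseqs_comp_permutes_exists[OF k0 inj_on_if_ucoeff_nonzero[OF f]] by blast
  have "ucoeff N n f k0 = of_int (sign ws) * ucoeff N n f ks"
    using ucoeff_comp_permutes[OF f ws, of ks] kw by simp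
  then have "ks \<in> ucoeff_support N n f"
    using False ks by (auto simp: ucoeff_support_def)
  moreover have "(\<Sum>w | w permutes {..<n}. if k \<circ> w = k0 then ucoeff N n f k0 else 0) =
      (if k = ks then ucoeff N n f k0 else 0)" if "k \<in> ucoeff_support N n f" for k
    using sum_permutes_decseqs_eq[OF ks ws, of k "\<lambda>_. ucoeff N n f k0"] that
    unfolding kw by (simp add: ucoeff_support_def)
  moreover have "finite (ucoeff_support N n f)"
    using finite_ucoeff_support[OF N] f by (simp add: Fspace_def)
  ultimately show ?thesis
    by (simp add: sum.delta')
next
  case True
  then show ?thesis by (simp only: True if_cancel sum.neutral_const)
qed

lemma lookup_sum_ucoeff_uhat_tlabel_zexp:
  assumes N: "N \<ge> 1" and f: "f \<in> Fspace N n" and k0: "k0 \<in> intvecs n"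
  shows "Poly_Mapping.lookup (\<Sum>k\<in>ucoeff_support N n f.
      lscale (ucoeff N n f k) (uhat N n k (tlabel N n k0))) (zexp N n k0) = ucoeff N n f k0"
proof -
  have "tlabel N n k0 = tlabel N n (k \<circ> w) \<and> zexp N n k0 = zexp N n (k \<circ> w) \<longleftrightarrow> k \<circ> w = k0"
    if "k \<in> ucoeff_support N n f" "w permutes {..<n}" for k w
  proof -
    have "k \<in> intvecs n" using that(1) decseqs_subset_intvecs by (auto simp: ucoeff_support_def)
    then show ?thesis
      using tlabel_zexp_inj[OF N intvecs_comp_permutes[OF _ that(2)] k0] by auto
  qed
  then have "Poly_Mapping.lookup (\<Sum>k\<in>ucoeff_support N n f.
      lscale (ucoeff N n f k) (uhat N n k (tlabel N n k0))) (zexp N n k0) =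
      (\<Sum>k\<in>ucoeff_support N n f. \<Sum>w | w permutes {..<n}. if k \<circ> w = k0 then ucoeff N n f k0 else 0)"
    unfolding lookup_sum_ucoeff_uhat[OF f] by (intro sum.cong refl) auto
  also have "\<dots> = ucoeff N n f k0"
    by (rule sum_ucoeff_support_comp_permutes[OF N f k0])
  finally show ?thesis .
qed

lemma Fspace_expansion:
  assumes N: "N \<ge> 1" and f: "f \<in> Fspace N n"
  shows "f c = (\<Sum>k\<in>ucoeff_support N n f. lscale (ucoeff N n f k) (uhat N n k c))"
proof (rule poly_mapping_eqI)
  fix a
  show "Poly_Mapping.lookup (f c) a =
      Poly_Mapping.lookup (\<Sum>k\<in>ucoeff_support N n f. lscale (ucoeff N n f k) (uhat N n k c)) a"
  proof (cases "c \<in> tidx N n \<and> Poly_Mapping.keys a \<subseteq> {..<n}")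
    case True
    then have "tlabel N n (tindex N n c a) = c" "zexp N n (tindex N n c a) = a"
      using tlabel_tindex[OF N] zexp_tindex[OF N] by auto
    then show ?thesis
      using lookup_sum_ucoeff_uhat_tlabel_zexp[OF N f tindex_in_intvecs[of N n c a]]
      by (simp add: ucoeff_def)
  next
    case False
    have "\<not> (c = tlabel N n k \<and> a = zexp N n k)" for k
      using False tlabel_in_tidx[OF N, of n k] keys_zexp[of N n k] by auto
    then have "Poly_Mapping.lookup (\<Sum>k\<in>ucoeff_support N n f. lscale (ucoeff N n f k) (uhat N n k c)) a = 0"
      unfolding lookup_sum_ucoeff_uhat[OF f] by (intro sum.neutral ballI) auto
    moreover have "f \<in> tspace N n"
      using f by (simp add: Fspace_def)
    then have "a \<notin> Poly_Mapping.keys (f c)"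
      using False by (auto simp: tspace_def in_vars_def)
    ultimately show ?thesis by (simp add: in_keys_iff)
  qed
qed

lemma lookup_uhat_tlabel_zexp:
  assumes N: "N \<ge> 1" and k: "k \<in> decseqs n" and k0: "k0 \<in> decseqs n"
  shows "Poly_Mapping.lookup (uhat N n k (tlabel N n k0)) (zexp N n k0) = (if k = k0 then 1 else 0)"
proof -
  have "tlabel N n k0 = tlabel N n (k \<circ> w) \<and> zexp N n k0 = zexp N n (k \<circ> w) \<longleftrightarrow> k \<circ> w = k0 \<circ> id"
    if "w permutes {..<n}" for w
    using tlabel_zexp_inj[OF N, of k0 n "k \<circ> w"] decseqs_subset_intvecs k k0
      intvecs_comp_permutes[OF _ that, of k] by auto
  then have "Poly_Mapping.lookup (uhat N n k (tlabel N n k0)) (zexp N n k0) =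
      (\<Sum>w | w permutes {..<n}. if k \<circ> w = k0 \<circ> id then of_int (sign w) else 0)"
    unfolding lookup_uhat by (intro sum.cong) auto
  also have "\<dots> = (if k = k0 then of_int (sign (id :: nat \<Rightarrow> nat)) else 0)"
    using sum_permutes_decseqs_eq[OF k0 permutes_id k, of "\<lambda>w. of_int (sign w)"] by (simp only:)
  finally show ?thesis by simp
qed

lemma Fspace_coords_unique:
  assumes N: "N \<ge> 1" and fin: "finite {k. coef k \<noteq> 0}" and sub: "{k. coef k \<noteq> 0} \<subseteq> decseqs n"
    and f: "f = (\<lambda>c. \<Sum>k | coef k \<noteq> 0. lscale (coef k) (uhat N n k c))" and k0: "k0 \<in> decseqs n"
  shows "ucoeff N n f k0 = coef k0"
proof -
  have "ucoeff N n f k0 = (\<Sum>k | coef k \<noteq> 0.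
      coef k * Poly_Mapping.lookup (uhat N n k (tlabel N n k0)) (zexp N n k0))"
    by (simp add: f ucoeff_def lookup_sum lookup_lscale)
  also have "\<dots> = (\<Sum>k | coef k \<noteq> 0. if k = k0 then coef k else 0)"
    using sub k0 by (intro sum.cong refl) (auto simp: lookup_uhat_tlabel_zexp[OF N])
  also have "\<dots> = coef k0"
    using fin by (auto simp: sum.delta')
  finally show ?thesis .
qed

lemma Omega_Fspace:
  assumes N: "N \<ge> 1" and f: "f \<in> Fspace N n"
  shows "Omega N n f =
    (\<Sum>k\<in>ucoeff_support N n f. lscale (ucoeff N n f k) (schur n (\<lambda>i. k i - ovec n i)))"
proof -
  define coef0 where "coef0 k = (if k \<in> decseqs n then ucoeff N n f k else 0)" for k
  have supp: "{k. coef0 k \<noteq> 0} = ucoeff_support N n f"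
    by (auto simp: coef0_def ucoeff_support_def)
  let ?R = "\<lambda>coef. \<Sum>k | coef k \<noteq> 0. lscale (coef k) (schur n (\<lambda>i. k i - ovec n i))"
  let ?P = "\<lambda>coef. finite {k. coef k \<noteq> 0} \<and> {k. coef k \<noteq> 0} \<subseteq> decseqs n \<and>
      f = (\<lambda>c. \<Sum>k | coef k \<noteq> 0. lscale (coef k) (uhat N n k c))"
  have "?P coef0"
    unfolding supp
  proof (intro conjI)
    show "finite (ucoeff_support N n f)"
      using finite_ucoeff_support[OF N] f by (simp add: Fspace_def)
    show "ucoeff_support N n f \<subseteq> decseqs n"
      by (auto simp: ucoeff_support_def)
    show "f = (\<lambda>c. \<Sum>k\<in>ucoeff_support N n f. lscale (coef0 k) (uhat N n k c))"
      using Fspace_expansion[OF N f]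
      by (auto simp: fun_eq_iff coef0_def ucoeff_support_def intro!: sum.cong)
  qed
  moreover have "coef = coef0" if "?P coef" for coef
  proof
    fix k0
    from that have fin: "finite {k. coef k \<noteq> 0}" and sub: "{k. coef k \<noteq> 0} \<subseteq> decseqs n"
      and eq: "f = (\<lambda>c. \<Sum>k | coef k \<noteq> 0. lscale (coef k) (uhat N n k c))" by blast+
    show "coef k0 = coef0 k0"
      using Fspace_coords_unique[OF N fin sub eq, of k0] sub by (auto simp: coef0_def)
  qed
  ultimately have "Omega N n f = ?R coef0"
    unfolding Omega_def by (intro the_equality) auto
  also have "\<dots> = (\<Sum>k\<in>ucoeff_support N n f. lscale (ucoeff N n f k) (schur n (\<lambda>i. k i - ovec n i)))"
    unfolding supp by (intro sum.cong) (auto simp: coef0_def ucoeff_support_def)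
  finally show ?thesis .
qed

section \<open>The Vandermonde identity\<close>

definition xvar :: "nat \<Rightarrow> lpoly" where
  "xvar i = var_pow i 1"

definition vandermonde :: "nat \<Rightarrow> lpoly" where
  "vandermonde n = (\<Prod>(i, j)\<in>{(i, j). i < j \<and> j < n}. xvar i - xvar j)"

text \<open>\<open>subst_var i j\<close> substitutes \<open>x\<^sub>j\<close> for \<open>x\<^sub>i\<close>.\<close>

definition merge_exp :: "nat \<Rightarrow> nat \<Rightarrow> (nat \<Rightarrow>\<^sub>0 int) \<Rightarrow> (nat \<Rightarrow>\<^sub>0 int)" where
  "merge_exp i j a = a - Poly_Mapping.single i (Poly_Mapping.lookup a i) +
    Poly_Mapping.single j (Poly_Mapping.lookup a i)"

definition subst_var :: "nat \<Rightarrow> nat \<Rightarrow> lpoly \<Rightarrow> lpoly" where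
  "subst_var i j = push_keys (merge_exp i j)"

interpretation subst_var: comm_ring_hom "subst_var i j" for i j
  unfolding subst_var_def
  by (rule comm_ring_hom_push_keys)
    (simp add: merge_exp_def lookup_add single_add algebra_simps)

lemma subst_var_var_pow: "subst_var i j (var_pow k e) = var_pow (if k = i then j else k) e"
  by (auto simp: subst_var_def var_pow_def merge_exp_def lookup_single when_def single_uminus)

lemma subst_var_xvar: "subst_var i j (xvar k) = xvar (if k = i then j else k)"
  by (simp add: xvar_def subst_var_var_pow)

lemma subst_var_Kswap: "i \<noteq> j \<Longrightarrow> subst_var i j (Kswap i j p) = subst_var i j p"
proof -
  assume "i \<noteq> j"
  then have "merge_exp i j \<circ> swap_exp i j = merge_exp i j"
    by (auto simp: fun_eq_iff poly_mapping_eq_iff merge_exp_def lookup_swap_exp lookup_add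
        lookup_minus lookup_single when_def)
  then show ?thesis
    by (simp add: subst_var_def Kswap_eq_push_keys push_keys_comp)
qed

lemma subst_var_eq_0_if_antisym:
  assumes "Kswap i j p = - p" "i \<noteq> j"
  shows "subst_var i j p = 0"
  using subst_var_Kswap[OF assms(2), of p] assms(1) by (simp add: subst_var.hom_uminus)

lemma xvar_diff_dvd_power_diff: "(xvar i - xvar j) dvd (xvar i ^ m - xvar j ^ m)"
  by (cases m) (simp_all only: diff_power_eq_sum dvd_triv_left, simp)

lemma var_pow_nat: "var_pow i (int m) = xvar i ^ m"
  by (induction m) (simp_all add: xvar_def var_pow_add)

lemma xvar_diff_dvd_var_pow_diff: "(xvar i - xvar j) dvd (var_pow i e - var_pow j e)"
proof (cases "e \<ge> 0")
  case True
  then obtain m where "e = int m" by (metis nonneg_int_cases)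
  then show ?thesis by (simp add: var_pow_nat xvar_diff_dvd_power_diff)
next
  case False
  then obtain m where e: "e = - int m" by (metis linorder_not_le neg_int_cases order_less_imp_le)
  have "var_pow i e - var_pow j e = var_pow i e * var_pow j e * - (xvar i ^ m - xvar j ^ m)"
    using var_pow_neg_mult[of i "int m"] var_pow_neg_mult[of j "int m"]
    by (simp add: e algebra_simps var_pow_nat flip: var_pow_nat)
  then show ?thesis
    by (metis dvd_minus_iff dvd_mult xvar_diff_dvd_power_diff)
qed

lemma xvar_diff_dvd_if_subst_var_eq_0:
  assumes "subst_var i j p = 0"
  shows "(xvar i - xvar j) dvd p"
proof -
  let ?e = "\<lambda>a. Poly_Mapping.lookup a i"
  let ?t = "\<lambda>a. Poly_Mapping.single (a - Poly_Mapping.single i (?e a)) (Poly_Mapping.lookup p a)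
       * (var_pow i (?e a) - var_pow j (?e a))"
  have "p = p - subst_var i j p" using assms by simp
  also have "\<dots> = (\<Sum>a\<in>Poly_Mapping.keys p. Poly_Mapping.single a (Poly_Mapping.lookup p a) -
      Poly_Mapping.single (merge_exp i j a) (Poly_Mapping.lookup p a))"
    by (subst (1) poly_mapping_expand) (simp add: subst_var_def push_keys_def sum_subtractf)
  also have "\<dots> = (\<Sum>a\<in>Poly_Mapping.keys p. ?t a)"
    by (simp add: right_diff_distrib var_pow_def mult_single merge_exp_def)
  finally show ?thesis
    by (metis (no_types, lifting) dvd_mult dvd_sum xvar_diff_dvd_var_pow_diff)
qed

lemma lookup_xvar: "Poly_Mapping.lookup (xvar i) a = (if a = Poly_Mapping.single i 1 then 1 else 0)"
  by (simp add: xvar_def var_pow_def lookup_single when_def eq_commute)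

lemma xvar_diff_nonzero:
  assumes "i \<noteq> j" shows "xvar i - xvar j \<noteq> 0"
proof
  assume "xvar i - xvar j = 0"
  then have "Poly_Mapping.lookup (xvar i - xvar j) (Poly_Mapping.single i 1) = 0" by simp
  moreover have "Poly_Mapping.single i (1::int) \<noteq> Poly_Mapping.single j 1"
    using assms by (metis lookup_single_eq lookup_single_not_eq zero_neq_one)
  ultimately show False by (simp add: lookup_minus lookup_xvar)
qed

lemma xvar_eq_iff: "xvar i = xvar j \<longleftrightarrow> i = j"
  using xvar_diff_nonzero[of i j] by auto

lemma prod_xvar_diff_dvd_antisym:
  assumes anti: "\<And>i j. i < j \<Longrightarrow> j < n \<Longrightarrow> Kswap i j p = - p"
    and Q: "finite Q" "Q \<subseteq> {(i, j). i < j \<and> j < n}"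
  shows "(\<Prod>(i, j)\<in>Q. xvar i - xvar j) dvd p"
  using Q
proof (induction Q rule: finite_induct)
  case (insert x Q)
  obtain i j where x: "x = (i, j)" and ij: "i < j" "j < n"
    using insert.prems by auto
  obtain r where r: "p = (\<Prod>(i, j)\<in>Q. xvar i - xvar j) * r"
    using insert by auto
  \<comment> \<open>the other factors stay nonzero under \<open>x\<^sub>i := x\<^sub>j\<close>, so \<open>x\<^sub>i - x\<^sub>j\<close> must divide the cofactor\<close>
  have "subst_var i j (xvar k - xvar l) \<noteq> 0" if "(k, l) \<in> Q" for k l
    using that insert.prems insert.hyps(2) x ij
    by (auto simp: subst_var.hom_diff subst_var_xvar xvar_eq_iff)
  then have "subst_var i j (\<Prod>(i, j)\<in>Q. xvar i - xvar j) \<noteq> 0"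
    using insert.hyps(1) by (auto simp: subst_var.hom_prod)
  moreover have "subst_var i j p = 0"
    using subst_var_eq_0_if_antisym[OF anti[OF ij]] ij by simp
  ultimately have "subst_var i j r = 0"
    using r by (simp add: subst_var.hom_mult)
  then obtain r' where "r = (xvar i - xvar j) * r'"
    using xvar_diff_dvd_if_subst_var_eq_0 by blast
  then have "p = (\<Prod>(i, j)\<in>insert x Q. xvar i - xvar j) * r'"
    using r insert.hyps x by (simp add: ac_simps)
  then show ?case by (rule dvdI)
qed simp

lemma vandermonde_dvd_antisym:
  assumes "\<And>i j. i < j \<Longrightarrow> j < n \<Longrightarrow> Kswap i j p = - p"
  shows "vandermonde n dvd p"
proof -
  have "finite {(i, j). i < j \<and> j < n}"
    by (rule finite_subset[of _ "{..<n} \<times> {..<n}"]) auto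
  from prod_xvar_diff_dvd_antisym[OF assms this] show ?thesis
    by (simp add: vandermonde_def)
qed

lemma lookup_mult_eq_sum:
  fixes p q :: "'a::comm_monoid_add \<Rightarrow>\<^sub>0 'b::comm_semiring_0"
  shows "Poly_Mapping.lookup (p * q) x = (\<Sum>a\<in>Poly_Mapping.keys p. \<Sum>b\<in>Poly_Mapping.keys q.
     if a + b = x then Poly_Mapping.lookup p a * Poly_Mapping.lookup q b else 0)"
  by (subst (1) poly_mapping_expand, subst (1) poly_mapping_expand[of q])
    (simp add: sum_product lookup_sum mult_single lookup_single when_def)

lemma Max_keys_mult:
  fixes p q :: "'a::linordered_ab_group_add \<Rightarrow>\<^sub>0 'b::idom"
  assumes p: "p \<noteq> 0" and q: "q \<noteq> 0"
  defines "Mp \<equiv> Max (Poly_Mapping.keys p)" and "Mq \<equiv> Max (Poly_Mapping.keys q)"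
  shows "Poly_Mapping.lookup (p * q) (Mp + Mq) = Poly_Mapping.lookup p Mp * Poly_Mapping.lookup q Mq"
    and "Max (Poly_Mapping.keys (p * q)) = Mp + Mq"
proof -
  have Mp: "Mp \<in> Poly_Mapping.keys p" "\<And>a. a \<in> Poly_Mapping.keys p \<Longrightarrow> a \<le> Mp"
    using p by (auto simp: Mp_def)
  have Mq: "Mq \<in> Poly_Mapping.keys q" "\<And>b. b \<in> Poly_Mapping.keys q \<Longrightarrow> b \<le> Mq"
    using q by (auto simp: Mq_def)
  have "a + b = Mp + Mq \<longleftrightarrow> a = Mp \<and> b = Mq"
    if "a \<in> Poly_Mapping.keys p" "b \<in> Poly_Mapping.keys q" for a b
  proof
    assume sum: "a + b = Mp + Mq"
    have "a \<le> Mp" "b \<le> Mq" using that Mp(2) Mq(2) by auto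
    moreover have "\<not> a < Mp"
      using add_less_le_mono[of a Mp b Mq] \<open>b \<le> Mq\<close> sum by auto
    ultimately show "a = Mp \<and> b = Mq" using sum by simp
  qed simp
  then have "Poly_Mapping.lookup (p * q) (Mp + Mq) = (\<Sum>a\<in>Poly_Mapping.keys p. \<Sum>b\<in>Poly_Mapping.keys q.
      if a = Mp then if b = Mq then Poly_Mapping.lookup p a * Poly_Mapping.lookup q b else 0 else 0)"
    unfolding lookup_mult_eq_sum by (intro sum.cong refl) auto
  also have "\<dots> = (\<Sum>a\<in>Poly_Mapping.keys p. if a = Mp then Poly_Mapping.lookup p a * Poly_Mapping.lookup q Mq else 0)"
    by (intro sum.cong refl) (auto simp: sum.delta Mq(1))
  also have "\<dots> = Poly_Mapping.lookup p Mp * Poly_Mapping.lookup q Mq"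
    by (simp add: sum.delta Mp(1))
  finally show lead: "Poly_Mapping.lookup (p * q) (Mp + Mq) = Poly_Mapping.lookup p Mp * Poly_Mapping.lookup q Mq" .
  have "x \<le> Mp + Mq" if "x \<in> Poly_Mapping.keys (p * q)" for x
    using keys_mult[of p q] that Mp(2) Mq(2) by (auto intro: add_mono)
  moreover have "Mp + Mq \<in> Poly_Mapping.keys (p * q)"
    using lead Mp(1) Mq(1) by (simp add: in_keys_iff)
  ultimately show "Max (Poly_Mapping.keys (p * q)) = Mp + Mq"
    by (intro Max_eqI) auto
qed

lemma keys_push_keys_inj:
  assumes "inj h"
  shows "Poly_Mapping.keys (push_keys h p) = h ` Poly_Mapping.keys p"
proof (intro set_eqI iffI)
  fix x assume x: "x \<in> Poly_Mapping.keys (push_keys h p)"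
  then have "x \<in> range h"
    using lookup_push_keys_notin_range[of x h p] by (auto simp: in_keys_iff)
  with x show "x \<in> h ` Poly_Mapping.keys p"
    by (auto simp: in_keys_iff lookup_push_keys_inj[OF assms])
qed (auto simp: in_keys_iff lookup_push_keys_inj[OF assms])

lemma Min_keys_conv_Max:
  fixes p :: "'a::linordered_ab_group_add \<Rightarrow>\<^sub>0 'b::comm_monoid_add"
  assumes "p \<noteq> 0"
  shows "Min (Poly_Mapping.keys p) = - Max (Poly_Mapping.keys (push_keys uminus p))"
proof -
  have "Max (uminus ` Poly_Mapping.keys p) = - Min (Poly_Mapping.keys p)"
    using assms by (intro Max_eqI) auto
  then show ?thesis
    by (simp add: keys_push_keys_inj)
qed

lemma Min_keys_mult:
  fixes p q :: "'a::linordered_ab_group_add \<Rightarrow>\<^sub>0 'b::idom"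
  assumes p: "p \<noteq> 0" and q: "q \<noteq> 0"
  shows "Min (Poly_Mapping.keys (p * q)) = Min (Poly_Mapping.keys p) + Min (Poly_Mapping.keys q)"
proof -
  interpret neg: comm_ring_hom "push_keys uminus :: ('a \<Rightarrow>\<^sub>0 'b) \<Rightarrow> _"
    by (rule comm_ring_hom_push_keys) simp
  have nz: "push_keys uminus r \<noteq> 0" if "r \<noteq> (0 :: 'a \<Rightarrow>\<^sub>0 'b)" for r
    using that keys_push_keys_inj[of uminus r] by auto
  show ?thesis
    using Max_keys_mult(2)[OF nz[OF p] nz[OF q]] p q
    by (simp add: Min_keys_conv_Max neg.hom_mult)
qed

lemma Max_keys_prod:
  fixes f :: "'x \<Rightarrow> 'a::linordered_ab_group_add \<Rightarrow>\<^sub>0 'b::idom"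
  assumes "finite S" "\<And>x. x \<in> S \<Longrightarrow> f x \<noteq> 0"
  shows "Max (Poly_Mapping.keys (prod f S)) = (\<Sum>x\<in>S. Max (Poly_Mapping.keys (f x)))"
  using assms by (induction S rule: finite_induct) (simp_all add: Max_keys_mult)

lemma lookup_prod_Max_keys:
  fixes f :: "'x \<Rightarrow> 'a::linordered_ab_group_add \<Rightarrow>\<^sub>0 'b::idom"
  assumes "finite S" "\<And>x. x \<in> S \<Longrightarrow> f x \<noteq> 0"
  shows "Poly_Mapping.lookup (prod f S) (\<Sum>x\<in>S. Max (Poly_Mapping.keys (f x))) =
    (\<Prod>x\<in>S. Poly_Mapping.lookup (f x) (Max (Poly_Mapping.keys (f x))))"
  using assms by (induction S rule: finite_induct) (simp_all add: Max_keys_mult flip: Max_keys_prod)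

lemma Min_keys_prod:
  fixes f :: "'x \<Rightarrow> 'a::linordered_ab_group_add \<Rightarrow>\<^sub>0 'b::idom"
  assumes "finite S" "\<And>x. x \<in> S \<Longrightarrow> f x \<noteq> 0"
  shows "Min (Poly_Mapping.keys (prod f S)) = (\<Sum>x\<in>S. Min (Poly_Mapping.keys (f x)))"
  using assms by (induction S rule: finite_induct) (simp_all add: Min_keys_mult)

lemma less_single_one:
  "(i::nat) < j \<Longrightarrow> Poly_Mapping.single j (1::int) < Poly_Mapping.single i 1"
  by (auto simp: less_poly_mapping.rep_eq less_fun_def lookup_single when_def intro!: exI[of _ i])

lemma extreme_keys_xvar_diff:
  assumes "i < j"
  shows "Max (Poly_Mapping.keys (xvar i - xvar j)) = Poly_Mapping.single i 1"
    and "Min (Poly_Mapping.keys (xvar i - xvar j)) = Poly_Mapping.single j 1"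
    and "Poly_Mapping.lookup (xvar i - xvar j) (Poly_Mapping.single i 1) = 1"
proof -
  have lt: "Poly_Mapping.single j (1::int) < Poly_Mapping.single i 1"
    using less_single_one[OF assms] .
  then have keys: "Poly_Mapping.keys (xvar i - xvar j) = {Poly_Mapping.single i 1, Poly_Mapping.single j 1}"
    by (auto simp: in_keys_iff lookup_minus lookup_xvar split: if_splits)
  show "Max (Poly_Mapping.keys (xvar i - xvar j)) = Poly_Mapping.single i 1"
    using lt by (auto simp: keys max_def dest: leD)
  show "Min (Poly_Mapping.keys (xvar i - xvar j)) = Poly_Mapping.single j 1"
    using lt by (auto simp: keys min_def dest: leD)
  show "Poly_Mapping.lookup (xvar i - xvar j) (Poly_Mapping.single i 1) = 1"
    using lt by (simp add: lookup_minus lookup_xvar)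
qed

lemma extreme_keys_vandermonde:
  fixes n :: nat
  defines "P \<equiv> {(i, j). i < j \<and> j < n}"
  shows "vandermonde n \<noteq> 0"
    and "Max (Poly_Mapping.keys (vandermonde n)) = (\<Sum>(i, j)\<in>P. Poly_Mapping.single i 1)"
    and "Poly_Mapping.lookup (vandermonde n) (\<Sum>(i, j)\<in>P. Poly_Mapping.single i 1) = 1"
    and "Min (Poly_Mapping.keys (vandermonde n)) = (\<Sum>(i, j)\<in>P. Poly_Mapping.single j 1)"
proof -
  have fin: "finite P"
    unfolding P_def by (rule finite_subset[of _ "{..<n} \<times> {..<n}"]) auto
  have nz: "(case x of (i, j) \<Rightarrow> xvar i - xvar j) \<noteq> 0" if "x \<in> P" for x
    using that xvar_diff_nonzero by (auto simp: P_def)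
  have e: "Max (Poly_Mapping.keys (case x of (i, j) \<Rightarrow> xvar i - xvar j)) = (case x of (i, j) \<Rightarrow> Poly_Mapping.single i 1)"
    "Min (Poly_Mapping.keys (case x of (i, j) \<Rightarrow> xvar i - xvar j)) = (case x of (i, j) \<Rightarrow> Poly_Mapping.single j 1)"
    "Poly_Mapping.lookup (case x of (i, j) \<Rightarrow> xvar i - xvar j) (case x of (i, j) \<Rightarrow> Poly_Mapping.single i 1) = 1"
    if "x \<in> P" for x
    using that extreme_keys_xvar_diff by (auto simp: P_def)
  have V: "vandermonde n = (\<Prod>x\<in>P. case x of (i, j) \<Rightarrow> xvar i - xvar j)"
    by (simp add: vandermonde_def P_def)
  show "vandermonde n \<noteq> 0"
    using fin nz by (simp add: V)
  show "Max (Poly_Mapping.keys (vandermonde n)) = (\<Sum>(i, j)\<in>P. Poly_Mapping.single i 1)"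
    using Max_keys_prod[OF fin nz] e(1) by (simp add: V cong: sum.cong)
  show "Poly_Mapping.lookup (vandermonde n) (\<Sum>(i, j)\<in>P. Poly_Mapping.single i 1) = 1"
    using lookup_prod_Max_keys[OF fin nz] e by (simp add: V cong: sum.cong prod.cong)
  show "Min (Poly_Mapping.keys (vandermonde n)) = (\<Sum>(i, j)\<in>P. Poly_Mapping.single j 1)"
    using Min_keys_prod[OF fin nz] e(2) by (simp add: V cong: sum.cong)
qed

definition alt_exp :: "nat \<Rightarrow> (nat \<Rightarrow> int) \<Rightarrow> (nat \<Rightarrow> nat) \<Rightarrow> (nat \<Rightarrow>\<^sub>0 int)" where
  "alt_exp n e \<sigma> = (\<Sum>i<n. Poly_Mapping.single i (e (\<sigma> i)))"

lemma lookup_alt_exp: "Poly_Mapping.lookup (alt_exp n e \<sigma>) l = (if l < n then e (\<sigma> l) else 0)"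
  unfolding alt_exp_def lookup_sum lookup_single when_def
  by (cases "l < n") (auto simp: sum.delta)

lemma prod_var_pow:
  "(\<Prod>i<n. var_pow i (f i)) = Poly_Mapping.single (\<Sum>i<n. Poly_Mapping.single i (f i)) 1"
  by (induction n) (simp_all add: var_pow_def mult_single add.commute)

lemma altdet_eq_sum_single:
  "altdet n e = (\<Sum>\<sigma> | \<sigma> permutes {..<n}. Poly_Mapping.single (alt_exp n e \<sigma>) (of_int (sign \<sigma>)))"
  unfolding altdet_def
  by (intro sum.cong refl) (simp add: prod_var_pow alt_exp_def mult_single flip: single_of_int)

lemma lookup_altdet: "Poly_Mapping.lookup (altdet n e) x =
    (\<Sum>\<sigma> | \<sigma> permutes {..<n}. if alt_exp n e \<sigma> = x then of_int (sign \<sigma>) else 0)"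
  unfolding altdet_eq_sum_single lookup_sum by (intro sum.cong refl) (simp add: lookup_single when_def)

lemma keys_altdet: "x \<in> Poly_Mapping.keys (altdet n e) \<Longrightarrow> \<exists>\<sigma>. \<sigma> permutes {..<n} \<and> x = alt_exp n e \<sigma>"
  by (rule ccontr) (auto simp: in_keys_iff lookup_altdet intro!: sum.neutral)

lemma Kswap_altdet:
  assumes ij: "i < n" "j < n" "i \<noteq> j"
  shows "Kswap i j (altdet n e) = - altdet n e"
proof -
  let ?\<tau> = "Transposition.transpose i j"
  have tp: "?\<tau> permutes {..<n}" using ij by (intro permutes_swap_id) auto
  have sgn: "sign (\<sigma> \<circ> ?\<tau>) = - sign \<sigma>" if "\<sigma> permutes {..<n}" for \<sigma>
  proof -
    have "permutation \<sigma>" using that by (rule permutes_imp_permutation[rotated]) simp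
    then show ?thesis using ij by (simp add: sign_compose permutation_swap_id sign_swap_id)
  qed
  have "swap_exp i j (alt_exp n e \<sigma>) = alt_exp n e (\<sigma> \<circ> ?\<tau>)" for \<sigma>
    using ij by (intro poly_mapping_eqI) (simp add: lookup_swap_exp lookup_alt_exp transpose_less_iff)
  then have "Kswap i j (altdet n e) =
      (\<Sum>\<sigma> | \<sigma> permutes {..<n}. Poly_Mapping.single (alt_exp n e (\<sigma> \<circ> ?\<tau>)) (of_int (sign \<sigma>)))"
    by (simp add: altdet_eq_sum_single Kswap_eq_push_keys push_keys_sum)
  also have "\<dots> = (\<Sum>\<sigma> | \<sigma> permutes {..<n}.
      Poly_Mapping.single (alt_exp n e ((\<sigma> \<circ> ?\<tau>) \<circ> ?\<tau>)) (of_int (sign (\<sigma> \<circ> ?\<tau>))))"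
    by (rule sum_permutations_compose_right[OF tp])
  also have "\<dots> = - altdet n e"
    by (simp add: altdet_eq_sum_single comp_assoc sgn single_uminus flip: sum_negf)
  finally show ?thesis .
qed

lemma vandermonde_dvd_altdet: "vandermonde n dvd altdet n e"
  by (rule vandermonde_dvd_antisym) (rule Kswap_altdet, auto)

lemma altdet_cong:
  assumes "\<And>j. j < n \<Longrightarrow> e j = e' j" shows "altdet n e = altdet n e'"
  unfolding altdet_def
proof (intro sum.cong refl arg_cong2[where f = "(*)"] prod.cong)
  fix \<sigma> i assume "\<sigma> \<in> {\<sigma>. \<sigma> permutes {..<n}}" "i \<in> {..<n}"
  then have "\<sigma> i < n" using permutes_in_image by fastforce
  then show "var_pow i (e (\<sigma> i)) = var_pow i (e' (\<sigma> i))" using assms by simp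
qed

lemma altdet_shift: "altdet n (\<lambda>j. e j + c) = (\<Prod>i<n. var_pow i c) * altdet n e"
  unfolding altdet_def sum_distrib_left
  by (intro sum.cong refl) (simp add: var_pow_add prod.distrib algebra_simps)

definition staircase :: "nat \<Rightarrow> nat \<Rightarrow> int" where
  "staircase n j = int n - 1 - int j"

definition rev_perm :: "nat \<Rightarrow> nat \<Rightarrow> nat" where
  "rev_perm n l = (if l < n then n - 1 - l else l)"

lemma rev_perm_permutes: "rev_perm n permutes {..<n}"
proof -
  have inj: "inj_on (rev_perm n) {..<n}" by (auto simp: inj_on_def rev_perm_def)
  have "rev_perm n ` {..<n} = {..<n}" by (rule endo_inj_surj) (auto simp: rev_perm_def inj)
  then have "bij_betw (rev_perm n) {..<n} {..<n}" using inj by (simp add: bij_betw_def)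
  then show ?thesis by (rule bij_imp_permutes) (simp add: rev_perm_def)
qed

lemma lookup_altdet_staircase:
  assumes s0: "\<sigma>0 permutes {..<n}"
  shows "Poly_Mapping.lookup (altdet n (staircase n)) (alt_exp n (staircase n) \<sigma>0) = of_int (sign \<sigma>0)"
proof -
  have "alt_exp n (staircase n) \<sigma> = alt_exp n (staircase n) \<sigma>0 \<longleftrightarrow> \<sigma> = \<sigma>0"
    if "\<sigma> permutes {..<n}" for \<sigma>
    using permutes_not_in[OF that] permutes_not_in[OF s0]
    by (auto simp: fun_eq_iff poly_mapping_eq_iff lookup_alt_exp staircase_def split: if_splits)
      (metis not_less)
  then have "Poly_Mapping.lookup (altdet n (staircase n)) (alt_exp n (staircase n) \<sigma>0) =
      (\<Sum>\<sigma> | \<sigma> permutes {..<n}. if \<sigma> = \<sigma>0 then of_int (sign \<sigma>) else 0)"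
    unfolding lookup_altdet by (intro sum.cong refl) auto
  also have "\<dots> = of_int (sign \<sigma>0)" using s0 by (simp add: sum.delta finite_permutations)
  finally show ?thesis .
qed

lemma less_poly_mapping_iff:
  "(a :: nat \<Rightarrow>\<^sub>0 int) < b \<longleftrightarrow>
    (\<exists>k. Poly_Mapping.lookup a k < Poly_Mapping.lookup b k \<and>
      (\<forall>k'<k. Poly_Mapping.lookup a k' = Poly_Mapping.lookup b k'))"
  by (simp add: less_poly_mapping.rep_eq less_fun_def)

lemma obtain_first_diff:
  fixes f g :: "nat \<Rightarrow> 'a"
  assumes "f \<noteq> g"
  obtains i0 where "f i0 \<noteq> g i0" "\<And>l. l < i0 \<Longrightarrow> f l = g l"
  using assms exists_least_iff[of "\<lambda>i. f i \<noteq> g i"] by (auto simp: fun_eq_iff)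

lemma alt_exp_staircase_less_id:
  assumes s: "\<sigma> permutes {..<n}" and ne: "\<sigma> \<noteq> id"
  shows "alt_exp n (staircase n) \<sigma> < alt_exp n (staircase n) id"
proof -
  obtain i0 where i0: "\<sigma> i0 \<noteq> i0" "\<And>l. l < i0 \<Longrightarrow> \<sigma> l = l"
    using obtain_first_diff[OF ne] by auto
  have i0n: "i0 < n" using i0(1) permutes_not_in[OF s] by force
  have "\<not> \<sigma> i0 < i0"
    using i0 permutes_inj[OF s] by (metis injD)
  then have "i0 < \<sigma> i0" "\<sigma> i0 < n"
    using i0(1) permutes_in_image[OF s] i0n by auto
  then show ?thesis unfolding less_poly_mapping_iff
    using i0 i0n by (intro exI[of _ i0]) (auto simp: lookup_alt_exp staircase_def)
qed

lemma alt_exp_staircase_greater_rev: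
  assumes s: "\<sigma> permutes {..<n}" and ne: "\<sigma> \<noteq> rev_perm n"
  shows "alt_exp n (staircase n) (rev_perm n) < alt_exp n (staircase n) \<sigma>"
proof -
  obtain i0 where i0: "\<sigma> i0 \<noteq> rev_perm n i0" "\<And>l. l < i0 \<Longrightarrow> \<sigma> l = rev_perm n l"
    using obtain_first_diff[OF ne] by blast
  have i0n: "i0 < n"
  proof (rule ccontr)
    assume "\<not> i0 < n"
    then have "\<sigma> i0 = i0" "rev_perm n i0 = i0"
      using permutes_not_in[OF s] by (auto simp: rev_perm_def)
    then show False using i0(1) by simp
  qed
  have sn: "\<sigma> i0 < n" using permutes_in_image[OF s] i0n by simp
  \<comment> \<open>the values \<open>n-1, \<dots>, n-i0\<close> are already taken by \<open>\<sigma> 0, \<dots>, \<sigma> (i0-1)\<close>\<close>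
  have lt: "\<sigma> i0 < n - 1 - i0"
  proof (rule ccontr)
    assume "\<not> \<sigma> i0 < n - 1 - i0"
    then have "n - 1 - \<sigma> i0 < i0" using i0(1) i0n sn by (simp add: rev_perm_def)
    then have "\<sigma> (n - 1 - \<sigma> i0) = \<sigma> i0"
      using i0(2) sn by (simp add: rev_perm_def)
    then show False
      using permutes_inj[OF s] \<open>n - 1 - \<sigma> i0 < i0\<close> by (metis injD less_irrefl)
  qed
  show ?thesis unfolding less_poly_mapping_iff
    using i0 i0n lt sn by (intro exI[of _ i0]) (auto simp: lookup_alt_exp staircase_def rev_perm_def)
qed

lemma Max_keys_altdet_staircase:
  "Max (Poly_Mapping.keys (altdet n (staircase n))) = alt_exp n (staircase n) id"
proof (rule Max_eqI)
  fix x assume "x \<in> Poly_Mapping.keys (altdet n (staircase n))"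
  then obtain \<sigma> where s: "\<sigma> permutes {..<n}" and x: "x = alt_exp n (staircase n) \<sigma>"
    using keys_altdet by blast
  show "x \<le> alt_exp n (staircase n) id"
    using alt_exp_staircase_less_id[OF s] x by (cases "\<sigma> = id") auto
qed (use lookup_altdet_staircase[OF permutes_id] in \<open>simp_all add: in_keys_iff\<close>)

lemma Min_keys_altdet_staircase:
  "Min (Poly_Mapping.keys (altdet n (staircase n))) = alt_exp n (staircase n) (rev_perm n)"
proof (rule Min_eqI)
  fix x assume "x \<in> Poly_Mapping.keys (altdet n (staircase n))"
  then obtain \<sigma> where s: "\<sigma> permutes {..<n}" and x: "x = alt_exp n (staircase n) \<sigma>"
    using keys_altdet by blast
  show "alt_exp n (staircase n) (rev_perm n) \<le> x"
    using alt_exp_staircase_greater_rev[OF s] x by (cases "\<sigma> = rev_perm n") auto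
qed (use lookup_altdet_staircase[OF rev_perm_permutes] in \<open>simp_all add: in_keys_iff\<close>)

lemma eq_one_if_extreme_keys_mult:
  fixes p q :: "'a::linordered_ab_group_add \<Rightarrow>\<^sub>0 'b::idom"
  assumes pq: "p * q \<noteq> 0"
    and max: "Max (Poly_Mapping.keys (p * q)) = Max (Poly_Mapping.keys p)"
    and min: "Min (Poly_Mapping.keys (p * q)) = Min (Poly_Mapping.keys p)"
    and lead: "Poly_Mapping.lookup (p * q) (Max (Poly_Mapping.keys p)) =
      Poly_Mapping.lookup p (Max (Poly_Mapping.keys p))"
  shows "q = 1"
proof -
  have p: "p \<noteq> 0" and q: "q \<noteq> 0" using pq by auto
  have "Max (Poly_Mapping.keys q) = 0" "Min (Poly_Mapping.keys q) = 0"
    using max min Max_keys_mult(2)[OF p q] Min_keys_mult[OF p q] by simp_all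
  then have "Poly_Mapping.keys q \<subseteq> {0}"
    using q by (metis Max_ge Min_le antisym finite_keys insert_iff subsetI)
  then have "q = Poly_Mapping.single 0 (Poly_Mapping.lookup q 0)"
    using poly_mapping_expand_superset[of "{0}" q] by simp
  moreover have "Poly_Mapping.lookup p (Max (Poly_Mapping.keys p)) \<noteq> 0"
    using p Max_in[of "Poly_Mapping.keys p"] by (simp add: in_keys_iff)
  then have "Poly_Mapping.lookup q 0 = 1"
    using lead Max_keys_mult(1)[OF p q] \<open>Max (Poly_Mapping.keys q) = 0\<close> by simp
  ultimately show ?thesis by simp
qed

lemma less_pairs_Sigma: "{(i, j). i < j \<and> j < n} = Sigma {..<n} (\<lambda>i. {i<..<n::nat})"
  by (auto dest: less_trans)

lemma sum_less_pairs:
  "(\<Sum>(i, j)\<in>{(i, j). i < j \<and> j < n}. f i j) = (\<Sum>i<n. \<Sum>j\<in>{i<..<n::nat}. f i j)"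
  unfolding less_pairs_Sigma by (rule sum.Sigma[symmetric]) auto

lemma lookup_sum_less_pairs_single:
  "Poly_Mapping.lookup (\<Sum>(i, j)\<in>{(i, j). i < j \<and> j < n}. Poly_Mapping.single (f i j) 1) l =
    (\<Sum>i<n. \<Sum>j\<in>{i<..<n::nat}. if f i j = l then 1 else (0::int))"
  by (simp only: sum_less_pairs lookup_sum lookup_single when_def)

lemma alt_exp_staircase_id:
  "alt_exp n (staircase n) id = (\<Sum>(i, j)\<in>{(i, j). i < j \<and> j < n}. Poly_Mapping.single i 1)"
proof (rule poly_mapping_eqI)
  fix l
  have "(\<Sum>i<n. \<Sum>j\<in>{i<..<n}. if i = l then 1 else 0) = (\<Sum>i<n. if i = l then int (card {i<..<n}) else 0)"
    by (intro sum.cong refl) auto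
  also have "\<dots> = (if l < n then int n - 1 - int l else 0)"
    by (simp add: sum.delta' of_nat_diff)
  finally show "Poly_Mapping.lookup (alt_exp n (staircase n) id) l =
      Poly_Mapping.lookup (\<Sum>(i, j)\<in>{(i, j). i < j \<and> j < n}. Poly_Mapping.single i 1) l"
    by (simp add: lookup_alt_exp staircase_def lookup_sum_less_pairs_single)
qed

lemma alt_exp_staircase_rev_perm:
  "alt_exp n (staircase n) (rev_perm n) = (\<Sum>(i, j)\<in>{(i, j). i < j \<and> j < n}. Poly_Mapping.single j 1)"
proof (rule poly_mapping_eqI)
  fix l
  have "(\<Sum>i<n. \<Sum>j\<in>{i<..<n}. if j = l then 1 else 0) = (\<Sum>i<n. if i < l \<and> l < n then 1 else (0::int))"
    by (intro sum.cong refl) (auto simp: sum.delta)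
  also have "\<dots> = (if l < n then int l else 0)"
  proof (cases "l < n")
    case True
    then have "(\<Sum>i<n. if i < l \<and> l < n then 1 else 0) = (\<Sum>i<l. 1::int)"
      by (intro sum.mono_neutral_cong_right) auto
    then show ?thesis using True by simp
  qed simp
  finally show "Poly_Mapping.lookup (alt_exp n (staircase n) (rev_perm n)) l =
      Poly_Mapping.lookup (\<Sum>(i, j)\<in>{(i, j). i < j \<and> j < n}. Poly_Mapping.single j 1) l"
    by (simp add: lookup_alt_exp staircase_def rev_perm_def of_nat_diff lookup_sum_less_pairs_single)
qed

theorem altdet_staircase_eq_vandermonde: "altdet n (staircase n) = vandermonde n"
proof -
  obtain q where q: "altdet n (staircase n) = vandermonde n * q"
    using vandermonde_dvd_altdet by blast
  note V = extreme_keys_vandermonde[of n]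
  have "q = 1"
  proof (rule eq_one_if_extreme_keys_mult)
    show "vandermonde n * q \<noteq> 0"
      using lookup_altdet_staircase[OF permutes_id, of n] by (auto simp: q[symmetric])
    show "Max (Poly_Mapping.keys (vandermonde n * q)) = Max (Poly_Mapping.keys (vandermonde n))"
      by (simp add: V(2) Max_keys_altdet_staircase alt_exp_staircase_id flip: q)
    show "Min (Poly_Mapping.keys (vandermonde n * q)) = Min (Poly_Mapping.keys (vandermonde n))"
      by (simp add: V(4) Min_keys_altdet_staircase alt_exp_staircase_rev_perm flip: q)
    show "Poly_Mapping.lookup (vandermonde n * q) (Max (Poly_Mapping.keys (vandermonde n))) =
        Poly_Mapping.lookup (vandermonde n) (Max (Poly_Mapping.keys (vandermonde n)))"
      using lookup_altdet_staircase[OF permutes_id, of n]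
      by (simp add: V(2,3) alt_exp_staircase_id flip: q)
  qed
  then show ?thesis using q by simp
qed

section \<open>Scalar products of basis vectors\<close>

definition xprod_pow :: "nat \<Rightarrow> int \<Rightarrow> lpoly" where
  "xprod_pow n e = (\<Prod>i<n. var_pow i e)"

lemma schur_mult_vandermonde:
  "schur n (\<lambda>i. k i - ovec n i) * vandermonde n = xprod_pow n (int n - 1) * altdet n k"
proof -
  have D: "altdet n (\<lambda>j. int n - 1 - int j) = vandermonde n"
    using altdet_staircase_eq_vandermonde[of n] by (simp add: staircase_def[abs_def])
  have "altdet n (\<lambda>j. (k j - ovec n j) + int n - 1 - int j) = altdet n (\<lambda>j. k j + (int n - 1))"
    by (rule altdet_cong) (simp add: ovec_def)
  also have "\<dots> = xprod_pow n (int n - 1) * altdet n k"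
    by (simp add: altdet_shift xprod_pow_def)
  finally have A: "altdet n (\<lambda>j. (k j - ovec n j) + int n - 1 - int j) = xprod_pow n (int n - 1) * altdet n k" .
  obtain s where s: "xprod_pow n (int n - 1) * altdet n k = vandermonde n * s"
    using vandermonde_dvd_altdet dvd_mult by blast
  have "schur n (\<lambda>i. k i - ovec n i) = s"
    unfolding schur_def D A
  proof (rule the_equality)
    fix s' assume "s' * vandermonde n = xprod_pow n (int n - 1) * altdet n k"
    then show "s' = s"
      using s extreme_keys_vandermonde(1)[of n] by (simp add: mult.commute)
  qed (metis s mult.commute)
  then show ?thesis using s by (simp add: mult.commute)
qed

lemma lstar_xprod_pow_mult: "lstar (xprod_pow n e) * xprod_pow n e = 1"
proof -
  have "lstar (xprod_pow n e) * xprod_pow n e = (\<Prod>i<n. var_pow i (- e) * var_pow i e)"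
    by (simp add: xprod_pow_def lstar.hom_prod prod.distrib)
  then show ?thesis by (simp add: var_pow_neg_mult)
qed

lemma prod_offdiag_eq_prod_less_pairs:
  fixes n :: nat
  shows "(\<Prod>i<n. \<Prod>j\<in>{..<n} - {i}. F i j) = (\<Prod>(i, j)\<in>{(i, j). i < j \<and> j < n}. F i j * F j i)"
proof -
  let ?P = "{(i, j). i < j \<and> j < n}"
  have fin: "finite ?P"
    by (rule finite_subset[of _ "{..<n} \<times> {..<n}"]) auto
  have "Sigma {..<n} (\<lambda>i. {..<n} - {i}) = ?P \<union> prod.swap ` ?P"
    by (auto simp: image_iff)
  moreover have "?P \<inter> prod.swap ` ?P = {}" by auto
  moreover have "inj_on prod.swap ?P" by (auto simp: inj_on_def)
  ultimately have "(\<Prod>(i, j)\<in>Sigma {..<n} (\<lambda>i. {..<n} - {i}). F i j) =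
      (\<Prod>(i, j)\<in>?P. F i j) * (\<Prod>(i, j)\<in>?P. F j i)"
    using fin by (simp add: prod.union_disjoint prod.reindex comp_def split_def)
  then show ?thesis
    by (simp add: prod.Sigma prod.distrib split_def)
qed

lemma lstar_vandermonde_mult:
  "lstar (vandermonde n) * vandermonde n =
    (\<Prod>i<n. \<Prod>j\<in>{..<n} - {i}. 1 - var_pow i 1 * var_pow j (-1))"
proof -
  have "lstar (xvar i - xvar j) * (xvar i - xvar j) =
      (1 - var_pow i 1 * var_pow j (-1)) * (1 - var_pow j 1 * var_pow i (-1))" for i j
  proof -
    have "(var_pow i 1 * var_pow j (-1)) * (var_pow j 1 * var_pow i (-1)) =
        (var_pow i (-1) * var_pow i 1) * (var_pow j (-1) * var_pow j 1)"
      by (simp only: ac_simps)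
    then have "(var_pow i 1 * var_pow j (-1)) * (var_pow j 1 * var_pow i (-1)) = 1"
      using var_pow_neg_mult[of i 1] var_pow_neg_mult[of j 1] by simp
    moreover have "var_pow i (-1) * var_pow i 1 = 1" "var_pow j (-1) * var_pow j 1 = 1"
      using var_pow_neg_mult[of i 1] var_pow_neg_mult[of j 1] by simp_all
    ultimately show ?thesis
      by (simp add: xvar_def lstar.hom_diff algebra_simps)
  qed
  then show ?thesis
    by (simp add: vandermonde_def lstar.hom_prod prod_offdiag_eq_prod_less_pairs split_def
        flip: prod.distrib)
qed

text \<open>\<open>push_keys (scale_exp N)\<close> is the substitution \<open>x\<^sub>i \<mapsto> x\<^sub>i\<^sup>N\<close>.\<close>

definition scale_exp :: "nat \<Rightarrow> (nat \<Rightarrow>\<^sub>0 int) \<Rightarrow> (nat \<Rightarrow>\<^sub>0 int)" where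
  "scale_exp N a = Poly_Mapping.map (\<lambda>x. int N * x) a"

lemma lookup_scale_exp: "Poly_Mapping.lookup (scale_exp N a) i = int N * Poly_Mapping.lookup a i"
  by (simp add: scale_exp_def map.rep_eq when_def)

lemma inj_scale_exp: "N \<ge> 1 \<Longrightarrow> inj (scale_exp N)"
  by (intro injI poly_mapping_eqI) (simp add: poly_mapping_eq_iff fun_eq_iff lookup_scale_exp)

interpretation scale_exp: comm_ring_hom "push_keys (scale_exp N) :: lpoly \<Rightarrow> lpoly" for N
  by (rule comm_ring_hom_push_keys) (simp add: poly_mapping_eq_iff fun_eq_iff lookup_scale_exp
      lookup_add algebra_simps)

lemma push_keys_scale_exp_var_pow: "push_keys (scale_exp N) (var_pow i e) = var_pow i (int N * e)"
  by (simp add: var_pow_def scale_exp_def)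

lemma Delta_eq:
  "Delta b N n = push_keys (scale_exp N) (torus_weight b n) * (lstar (vandermonde n) * vandermonde n)"
  by (simp add: Delta_def torus_weight_def lstar_vandermonde_mult prod.distrib scale_exp.hom_prod
      scale_exp.hom_power scale_exp.hom_diff scale_exp.hom_one scale_exp.hom_mult
      push_keys_scale_exp_var_pow)

lemma lookup_torus_weight_uminus:
  "Poly_Mapping.lookup (torus_weight b n) (- a) = Poly_Mapping.lookup (torus_weight b n) a"
proof -
  interpret neg: comm_ring_hom "push_keys uminus :: lpoly \<Rightarrow> lpoly"
    by (rule comm_ring_hom_push_keys) simp
  have "push_keys uminus (var_pow i e) = var_pow i (- e)" for i e
    by (simp add: var_pow_def single_uminus)
  then have "push_keys uminus (torus_weight b n) =
      (\<Prod>i<n. \<Prod>j\<in>{..<n} - {i}. (1 - var_pow j 1 * var_pow i (-1)) ^ b)"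
    by (simp add: torus_weight_def neg.hom_prod neg.hom_power neg.hom_diff neg.hom_one
        neg.hom_mult mult.commute)
  also have "\<dots> = torus_weight b n"
    unfolding torus_weight_def prod_offdiag_eq_prod_less_pairs by (simp add: mult.commute)
  finally show ?thesis
    using lookup_push_keys_inj[of uminus "torus_weight b n" a] by (simp add: inj_def)
qed

definition exp_vec :: "nat \<Rightarrow> (nat \<Rightarrow> int) \<Rightarrow> (nat \<Rightarrow>\<^sub>0 int)" where
  "exp_vec n \<kappa> = (\<Sum>i<n. Poly_Mapping.single i (\<kappa> i))"

lemma lookup_exp_vec: "Poly_Mapping.lookup (exp_vec n \<kappa>) i = (if i < n then \<kappa> i else 0)"
  unfolding exp_vec_def lookup_sum lookup_single when_def
  by (cases "i < n") (auto simp: sum.delta)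

lemma lookup_exp_vec_diff:
  assumes "N \<ge> 1" "i < n"
  shows "Poly_Mapping.lookup (exp_vec n \<kappa> - exp_vec n \<mu>) i =
    ul N (\<kappa> i) - ul N (\<mu> i) + int N * Poly_Mapping.lookup (zexp N n \<mu> - zexp N n \<kappa>) i"
  using assms ul_ol_decomp[OF assms(1), of "\<kappa> i"] ul_ol_decomp[OF assms(1), of "\<mu> i"]
  by (simp add: lookup_minus lookup_exp_vec lookup_zexp algebra_simps)

lemma exp_vec_diff_eq_scale_exp:
  assumes N: "N \<ge> 1" and "tlabel N n \<kappa> = tlabel N n \<mu>"
  shows "exp_vec n \<kappa> - exp_vec n \<mu> = scale_exp N (zexp N n \<mu> - zexp N n \<kappa>)"
proof (rule poly_mapping_eqI)
  fix i
  show "Poly_Mapping.lookup (exp_vec n \<kappa> - exp_vec n \<mu>) i =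
      Poly_Mapping.lookup (scale_exp N (zexp N n \<mu> - zexp N n \<kappa>)) i"
  proof (cases "i < n")
    case True
    then have "ul N (\<kappa> i) = ul N (\<mu> i)"
      using fun_cong[OF assms(2), of i] ul_bounds[OF N, of "\<kappa> i"] ul_bounds[OF N, of "\<mu> i"]
      by (simp add: tlabel_def)
    then show ?thesis
      by (simp add: lookup_exp_vec_diff[OF N True] lookup_scale_exp)
  qed (simp add: lookup_scale_exp lookup_minus lookup_exp_vec lookup_zexp)
qed

lemma exp_vec_diff_notin_range_scale_exp:
  assumes N: "N \<ge> 1" and "tlabel N n \<kappa> \<noteq> tlabel N n \<mu>"
  shows "exp_vec n \<kappa> - exp_vec n \<mu> \<notin> range (scale_exp N)"
proof
  obtain i where i: "i < n" "ul N (\<kappa> i) \<noteq> ul N (\<mu> i)"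
    using assms(2) by (auto simp: tlabel_def fun_eq_iff split: if_splits)
  assume "exp_vec n \<kappa> - exp_vec n \<mu> \<in> range (scale_exp N)"
  then obtain y where "exp_vec n \<kappa> - exp_vec n \<mu> = scale_exp N y" by blast
  from arg_cong[OF this, of "\<lambda>q. Poly_Mapping.lookup q i"]
  have "ul N (\<kappa> i) - ul N (\<mu> i) =
      int N * (Poly_Mapping.lookup y i - Poly_Mapping.lookup (zexp N n \<mu> - zexp N n \<kappa>) i)"
    by (simp add: lookup_exp_vec_diff[OF N i(1)] lookup_scale_exp algebra_simps)
  then have "int N dvd ul N (\<kappa> i) - ul N (\<mu> i)"
    by (rule dvdI)
  moreover have "\<bar>ul N (\<kappa> i) - ul N (\<mu> i)\<bar> < \<bar>int N\<bar>"
    using ul_bounds[OF N, of "\<kappa> i"] ul_bounds[OF N, of "\<mu> i"] by linarith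
  ultimately show False
    using dvd_imp_le_int[of "ul N (\<kappa> i) - ul N (\<mu> i)" "int N"] i(2) by linarith
qed

lemma lookup_scaled_weight:
  assumes N: "N \<ge> 1" and sym: "\<And>a. Poly_Mapping.lookup p (- a) = Poly_Mapping.lookup p a"
  shows "Poly_Mapping.lookup (push_keys (scale_exp N) p) (exp_vec n \<kappa> - exp_vec n \<mu>) =
    (if tlabel N n \<kappa> = tlabel N n \<mu> then Poly_Mapping.lookup p (zexp N n \<kappa> - zexp N n \<mu>) else 0)"
proof (cases "tlabel N n \<kappa> = tlabel N n \<mu>")
  case True
  then show ?thesis
    using sym[of "zexp N n \<kappa> - zexp N n \<mu>"]
    by (simp add: exp_vec_diff_eq_scale_exp[OF N] lookup_push_keys_inj[OF inj_scale_exp[OF N]])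
next
  case False
  then show ?thesis
    by (simp add: lookup_push_keys_notin_range exp_vec_diff_notin_range_scale_exp[OF N])
qed

lemma lstar_uhat_mult_uhat:
  "lstar (uhat N n k c) * uhat N n l c = (\<Sum>w | w permutes {..<n}. \<Sum>w' | w' permutes {..<n}.
    if c = tlabel N n (k \<circ> w) \<and> c = tlabel N n (l \<circ> w')
    then Poly_Mapping.single (zexp N n (l \<circ> w') - zexp N n (k \<circ> w)) (of_int (sign w * sign w'))
    else 0)"
  unfolding uhat_eq lstar.hom_sum sum_product
  by (intro sum.cong refl) (simp add: mult_single lstar.hom_zero)

lemma tensor_pairing_uhat:
  assumes N: "N \<ge> 1"
  shows "tensor_pairing N n (uhat N n k) (uhat N n l) =
    (\<Sum>w | w permutes {..<n}. \<Sum>w' | w' permutes {..<n}.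
      if tlabel N n (k \<circ> w) = tlabel N n (l \<circ> w')
      then Poly_Mapping.single (zexp N n (l \<circ> w') - zexp N n (k \<circ> w)) (of_int (sign w * sign w'))
      else 0)"
proof -
  have "tensor_pairing N n (uhat N n k) (uhat N n l) =
    (\<Sum>w | w permutes {..<n}. \<Sum>w' | w' permutes {..<n}. \<Sum>c\<in>tidx N n.
      if c = tlabel N n (k \<circ> w) \<and> c = tlabel N n (l \<circ> w')
      then Poly_Mapping.single (zexp N n (l \<circ> w') - zexp N n (k \<circ> w)) (of_int (sign w * sign w'))
      else 0)"
    unfolding tensor_pairing_def lstar_uhat_mult_uhat
    by (subst sum.swap) (simp add: sum.swap[of _ "tidx N n"])
  also have "\<dots> = (\<Sum>w | w permutes {..<n}. \<Sum>w' | w' permutes {..<n}.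
      if tlabel N n (k \<circ> w) = tlabel N n (l \<circ> w')
      then Poly_Mapping.single (zexp N n (l \<circ> w') - zexp N n (k \<circ> w)) (of_int (sign w * sign w'))
      else 0)"
    using tlabel_in_tidx[OF N]
    by (intro sum.cong refl) (simp add: sum.delta finite_tidx conj_commute
        eq_commute[of _ "tlabel N n (k \<circ> _)"] cong: conj_cong)
  finally show ?thesis .
qed

lemma lstar_altdet_mult:
  "lstar (altdet n k) * altdet n l = (\<Sum>w | w permutes {..<n}. \<Sum>w' | w' permutes {..<n}.
     Poly_Mapping.single (exp_vec n (l \<circ> w') - exp_vec n (k \<circ> w)) (of_int (sign w * sign w')))"
  unfolding altdet_eq_sum_single lstar.hom_sum sum_product
  by (intro sum.cong refl) (simp add: mult_single alt_exp_def exp_vec_def)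

lemma Delta_mult_schur:
  "Delta b N n * lstar (schur n (\<lambda>i. k i - ovec n i)) * schur n (\<lambda>i. l i - ovec n i) =
    push_keys (scale_exp N) (torus_weight b n) * (lstar (altdet n k) * altdet n l)"
proof -
  let ?W = "push_keys (scale_exp N) (torus_weight b n)" and ?X = "xprod_pow n (int n - 1)"
    and ?V = "vandermonde n"
  have "Delta b N n * lstar (schur n (\<lambda>i. k i - ovec n i)) * schur n (\<lambda>i. l i - ovec n i) =
      ?W * (lstar (schur n (\<lambda>i. k i - ovec n i) * ?V) * (schur n (\<lambda>i. l i - ovec n i) * ?V))"
    by (simp add: Delta_eq lstar.hom_mult ac_simps)
  also have "\<dots> = ?W * (lstar (?X * altdet n k) * (?X * altdet n l))"
    by (simp only: schur_mult_vandermonde)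
  also have "\<dots> = ?W * ((lstar ?X * ?X) * (lstar (altdet n k) * altdet n l))"
    by (simp add: lstar.hom_mult ac_simps)
  finally show ?thesis
    by (simp add: lstar_xprod_pow_mult)
qed

theorem const_term_pairing_uhat_eq:
  assumes N: "N \<ge> 1"
  shows "const_term (torus_weight b n * tensor_pairing N n (uhat N n k) (uhat N n l)) =
    const_term (Delta b N n * lstar (schur n (\<lambda>i. k i - ovec n i)) * schur n (\<lambda>i. l i - ovec n i))"
proof -
  have "const_term (torus_weight b n * tensor_pairing N n (uhat N n k) (uhat N n l)) =
      (\<Sum>w | w permutes {..<n}. \<Sum>w' | w' permutes {..<n}.
        (if tlabel N n (k \<circ> w) = tlabel N n (l \<circ> w')
         then Poly_Mapping.lookup (torus_weight b n) (zexp N n (k \<circ> w) - zexp N n (l \<circ> w')) else 0)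
        * of_int (sign w * sign w'))"
    unfolding tensor_pairing_uhat[OF N] sum_distrib_left const_term_sum
    by (intro sum.cong refl) (simp add: const_term_mult_single)
  also have "\<dots> = const_term (push_keys (scale_exp N) (torus_weight b n) * (lstar (altdet n k) * altdet n l))"
    unfolding lstar_altdet_mult sum_distrib_left const_term_sum
    by (intro sum.cong refl)
      (simp add: const_term_mult_single lookup_scaled_weight[OF N lookup_torus_weight_uminus])
  finally show ?thesis
    by (simp only: Delta_mult_schur)
qed

lemma lstar_sum_lscale_mult:
  "lstar (\<Sum>k\<in>K. lscale (\<alpha> k) (x k)) * (\<Sum>l\<in>L. lscale (\<beta> l) (y l)) =
    (\<Sum>k\<in>K. \<Sum>l\<in>L. lscale (cnj (\<alpha> k) * \<beta> l) (lstar (x k) * y l))"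
  by (simp add: lstar.hom_sum lstar_lscale sum_product lscale_mult_lscale)

lemma tensor_pairing_sum_lscale:
  "tensor_pairing N n (\<lambda>c. \<Sum>k\<in>K. lscale (\<alpha> k) (x k c)) (\<lambda>c. \<Sum>l\<in>L. lscale (\<beta> l) (y l c)) =
    (\<Sum>k\<in>K. \<Sum>l\<in>L. lscale (cnj (\<alpha> k) * \<beta> l) (tensor_pairing N n (x k) (y l)))"
  unfolding tensor_pairing_def lstar_sum_lscale_mult lscale_sum
  by (subst sum.swap, rule sum.cong[OF refl], rule sum.swap)

lemma const_term_mult_sum_lscale:
  "const_term (p * (\<Sum>k\<in>K. \<Sum>l\<in>L. lscale (\<gamma> k l) (q k l))) =
    (\<Sum>k\<in>K. \<Sum>l\<in>L. \<gamma> k l * const_term (p * q k l))"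
  by (simp add: sum_distrib_left const_term_sum const_term_mult_lscale)

theorem proposition15:
  fixes N n b :: nat and f g :: "(nat \<Rightarrow> nat) \<Rightarrow> lpoly"
  assumes "N \<ge> 1" and "n \<ge> 1" and "b \<ge> 1"
    and "f \<in> Fspace N n" and "g \<in> Fspace N n"
  shows "ip_z b N n f g = ip_x b N n (Omega N n f) (Omega N n g)"
proof -
  note N = assms(1)
  let ?\<alpha> = "ucoeff N n f" and ?\<beta> = "ucoeff N n g"
    and ?K = "ucoeff_support N n f" and ?L = "ucoeff_support N n g"
    and ?s = "\<lambda>k. schur n (\<lambda>i. k i - ovec n i)"
  have f: "f = (\<lambda>c. \<Sum>k\<in>?K. lscale (?\<alpha> k) (uhat N n k c))"
    using Fspace_expansion[OF N assms(4)] by blast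
  have g: "g = (\<lambda>c. \<Sum>l\<in>?L. lscale (?\<beta> l) (uhat N n l c))"
    using Fspace_expansion[OF N assms(5)] by blast
  have "ip_z b N n f g = inverse (fact n) * const_term (torus_weight b n * tensor_pairing N n f g)"
    using assms(4,5) by (intro ip_z_eq_const_term) (simp_all add: Fspace_def)
  also have "\<dots> = inverse (fact n) * (\<Sum>k\<in>?K. \<Sum>l\<in>?L. cnj (?\<alpha> k) * ?\<beta> l *
      const_term (torus_weight b n * tensor_pairing N n (uhat N n k) (uhat N n l)))"
    by (subst f, subst g) (simp only: tensor_pairing_sum_lscale const_term_mult_sum_lscale)
  also have "\<dots> = inverse (fact n) * (\<Sum>k\<in>?K. \<Sum>l\<in>?L. cnj (?\<alpha> k) * ?\<beta> l *
      const_term (Delta b N n * (lstar (?s k) * ?s l)))"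
    by (simp only: const_term_pairing_uhat_eq[OF N] mult.assoc)
  also have "\<dots> = ip_x b N n (Omega N n f) (Omega N n g)"
    by (simp only: ip_x_def Omega_Fspace[OF N assms(4)] Omega_Fspace[OF N assms(5)] mult.assoc
        lstar_sum_lscale_mult const_term_mult_sum_lscale)
  finally show ?thesis .
qed

end
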